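(* Let $T=0$, let $\epsilon>0$ be admissible, and let $\mathbf X^{(\epsilon)}(t)=(X_0(t),\dots,X_{n_\epsilon-1}(t))$ be the continuous-time Markov chain on $\mathbb N^{n_\epsilon}$ defined in the context. If $$\lambda<\frac{C}{L\ln(2)\int_{\mathbf S} l_\epsilon(x,0)\,dx}=\frac{C}{L\ln(2)\,\epsilon^2\sum_{k=0}^{n_\epsilon-1}l_\epsilon(a_k,0)},$$ then $\mathbf X^{(\epsilon)}(t)$ is ergodic (positive recurrent).
   Context: Setting ($T=0$). $\mathbf S=[-Q,Q]^2$ with opposite edges identified (flat torus), torus distance $\|\cdot\|$. Path-loss $l:[0,\infty)\to[0,\infty)$ bounded, non-increasing, $l(0)=1$; noise $\mathcal N_0>0$; constants $C>0$, $L>0$, $\lambda>0$. Discretization: $\epsilon>0$ is admissible if $2Q/\epsilon$ is an integer; tessellate $\mathbf S$ into $n_\epsilon=(2Q/\epsilon)^2$ squares $A_0,\dots,A_{n_\epsilon-1}$ of side $\epsilon$ with centers $a_i$ and $a_0=0$. Define $l_\epsilon(a_i,a_j)=\sup\{l(\|b-b'\|): b\in\overline{A_i},\,b'\in\overline{A_j}\}$ and, for $x\in A_i$, $y\in A_j$, $l_\epsilon(x,y)=l_\epsilon(a_i,a_j)$. The chain $\mathbf X^{(\epsilon)}$ on $\mathbb N^{n_\epsilon}$ (the cell-count process of the discretized birth–death dynamics) has transitions: for each $i$, $X_i\to X_i+1$ at rate $\lambda\epsilon^2$, and $X_i\to X_i-1$ at rate $\frac{C}{L}X_i\log_2\!\Big(1+\frac{1}{\mathcal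 N_0+\sum_{j=0}^{n_\epsilon-1}(X_j-\mathbf 1\{j=i\})\,l_\epsilon(a_i,a_j)}\Big)$. *)

theory Defs
  imports "HOL-Analysis.Analysis"
begin

text \<open>A chain is given by its off-diagonal rates q x y (x \<noteq> y) on a state set S.\<close>

definition out_rate :: "('s \<Rightarrow> 's \<Rightarrow> real) \<Rightarrow> 's set \<Rightarrow> 's \<Rightarrow> ennreal" where
  "out_rate q S x = (\<integral>\<^sup>+ y. ennreal (q x y) \<partial>count_space (S - {x}))"

definition jump_prob :: "('s \<Rightarrow> 's \<Rightarrow> real) \<Rightarrow> 's set \<Rightarrow> 's \<Rightarrow> 's \<Rightarrow> ennreal" where
  "jump_prob q S x y =
     (if x \<in> S \<and> y \<in> S \<and> y \<noteq> x then ennreal (q x y) / out_rate q S x else 0)"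

definition path_prob :: "('s \<Rightarrow> 's \<Rightarrow> real) \<Rightarrow> 's set \<Rightarrow> 's list \<Rightarrow> ennreal" where
  "path_prob q S xs = (\<Prod>i<length xs - 1. jump_prob q S (xs ! i) (xs ! Suc i))"

definition excursions :: "'s set \<Rightarrow> 's \<Rightarrow> 's list set" where
  "excursions S x = {ys. set ys \<subseteq> S - {x}}"

text \<open>Probability, started in x, that the chain ever returns to x after its first jump.\<close>
definition return_prob :: "('s \<Rightarrow> 's \<Rightarrow> real) \<Rightarrow> 's set \<Rightarrow> 's \<Rightarrow> ennreal" where
  "return_prob q S x =
     (\<integral>\<^sup>+ ys. path_prob q S (x # ys @ [x]) \<partial>count_space (excursions S x))"

text \<open>Expected return time E_x[T_x; T_x < \<infinity>]: along a returning jump path x, y1, ..., yk, x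
  the holding times are independent exponentials with means 1/q(x), 1/q(y1), ..., 1/q(yk).\<close>
definition mean_return_time :: "('s \<Rightarrow> 's \<Rightarrow> real) \<Rightarrow> 's set \<Rightarrow> 's \<Rightarrow> ennreal" where
  "mean_return_time q S x =
     (\<integral>\<^sup>+ ys. path_prob q S (x # ys @ [x]) * (\<Sum>z\<leftarrow>x # ys. 1 / out_rate q S z)
        \<partial>count_space (excursions S x))"

text \<open>Positive recurrence (Norris): q_x = 0, or E_x[T_x] < \<infinity> (where T_x = \<infinity> on non-return).\<close>
definition ctmc_positive_recurrent :: "('s \<Rightarrow> 's \<Rightarrow> real) \<Rightarrow> 's set \<Rightarrow> 's \<Rightarrow> bool" where
  "ctmc_positive_recurrent q S x \<longleftrightarrow>
     out_rate q S x = 0 \<or> (return_prob q S x = 1 \<and> mean_return_time q S x < \<infinity>)"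

definition ctmc_irreducible :: "('s \<Rightarrow> 's \<Rightarrow> real) \<Rightarrow> 's set \<Rightarrow> bool" where
  "ctmc_irreducible q S \<longleftrightarrow>
     (\<forall>x\<in>S. \<forall>y\<in>S. (x, y) \<in> {(a, b). a \<in> S \<and> b \<in> S \<and> a \<noteq> b \<and> q a b > 0}\<^sup>*)"

definition ctmc_ergodic :: "('s \<Rightarrow> 's \<Rightarrow> real) \<Rightarrow> 's set \<Rightarrow> bool" where
  "ctmc_ergodic q S \<longleftrightarrow> ctmc_irreducible q S \<and> (\<forall>x\<in>S. ctmc_positive_recurrent q S x)"

definition tdist1 :: "real \<Rightarrow> real \<Rightarrow> real" where
  "tdist1 Q u = Inf (range (\<lambda>k::int. \<bar>u - 2 * Q * of_int k\<bar>))"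

definition torus_dist :: "real \<Rightarrow> real \<times> real \<Rightarrow> real \<times> real \<Rightarrow> real" where
  "torus_dist Q b b' = sqrt ((tdist1 Q (fst b - fst b'))\<^sup>2 + (tdist1 Q (snd b - snd b'))\<^sup>2)"

text \<open>Center a_i of cell i (i < m^2, m = 2Q/eps); a_0 = 0. Points of the torus are represented
  by points of R^2 modulo 2Q in each coordinate.\<close>
definition cell_center :: "real \<Rightarrow> nat \<Rightarrow> nat \<Rightarrow> real \<times> real" where
  "cell_center eps m i = (eps * real (i mod m), eps * real (i div m))"

definition cell_closure :: "real \<Rightarrow> real \<times> real \<Rightarrow> (real \<times> real) set" where
  "cell_closure eps a = {b. \<bar>fst b - fst a\<bar> \<le> eps / 2 \<and> \<bar>snd b - snd a\<bar> \<le> eps / 2}"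

definition l_eps :: "(real \<Rightarrow> real) \<Rightarrow> real \<Rightarrow> real \<Rightarrow> real \<times> real \<Rightarrow> real \<times> real \<Rightarrow> real" where
  "l_eps l Q eps a a' =
     Sup {l (torus_dist Q b b') | b b'. b \<in> cell_closure eps a \<and> b' \<in> cell_closure eps a'}"

definition death_rate ::
  "(real \<Rightarrow> real) \<Rightarrow> real \<Rightarrow> real \<Rightarrow> nat \<Rightarrow> real \<Rightarrow> real \<Rightarrow> real \<Rightarrow> nat list \<Rightarrow> nat \<Rightarrow> real" where
  "death_rate l Q eps m C L N0 x i =
     C / L * real (x ! i) *
     log 2 (1 + 1 / (N0 + (\<Sum>j<m\<^sup>2. (real (x ! j) - (if j = i then 1 else 0)) *
                         l_eps l Q eps (cell_center eps m i) (cell_center eps m j))))"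

definition disc_rate ::
  "(real \<Rightarrow> real) \<Rightarrow> real \<Rightarrow> real \<Rightarrow> nat \<Rightarrow> real \<Rightarrow> real \<Rightarrow> real \<Rightarrow> real \<Rightarrow> nat list \<Rightarrow> nat list \<Rightarrow> real" where
  "disc_rate l Q eps m lam C L N0 x y =
     (\<Sum>i<m\<^sup>2. (if y = x[i := x ! i + 1] then lam * eps\<^sup>2 else 0)) +
     (\<Sum>i<m\<^sup>2. (if 0 < x ! i \<and> y = x[i := x ! i - 1] then death_rate l Q eps m C L N0 x i else 0))"

definition disc_states :: "nat \<Rightarrow> nat list set" where
  "disc_states m = {x. length x = m\<^sup>2}"

end

theory Submission
  imports Defs
begin

text \<open>
  The chain is irreducible: deaths lead from every configuration to the empty one and births
  lead back. Positive recurrence follows from Foster's criterion for the embedded jump chain,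
  with the interference energy Phi(x) = 1/2 sum_{i,j} x_i x_j l_eps(a_i, a_j) as Lyapunov
  function. A birth in cell i raises Phi by I_i + 1/2 and a death lowers it by I_i - 1/2, where
  I_i = sum_j x_j l_eps(a_i, a_j) is the interference seen in cell i. Since
  ln(1 + 1/D) >= 1/(D + 1), the death rate in cell i is at least c x_i / (N0 + I_i) with
  c = C / (L ln 2), so deaths lower Phi at rate at least c x_i - c (N0 + 1/2). By translation
  invariance on the torus every column of l_eps(a_i, a_j) sums to S0 = sum_k l_eps(a_k, 0), so
  births raise Phi at rate at most lambda eps^2 S0 sum_i x_i plus a constant. The drift of Phi
  is therefore at most a constant minus (c - lambda eps^2 S0) sum_i x_i, which is below -1
  outside a finite set as soon as lambda eps^2 S0 < c; this is the hypothesis of the theorem.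
\<close>

section \<open>Kernels on countable sets\<close>

definition kernel_op :: "('s \<Rightarrow> 's \<Rightarrow> ennreal) \<Rightarrow> 's set \<Rightarrow> ('s \<Rightarrow> ennreal) \<Rightarrow> 's \<Rightarrow> ennreal" where
  "kernel_op p A g z = (\<integral>\<^sup>+ y. p z y * g y \<partial>count_space A)"

lemma kernel_op_mono:
  assumes "\<And>y. y \<in> A \<Longrightarrow> f y \<le> g y"
  shows "kernel_op p A f z \<le> kernel_op p A g z"
  unfolding kernel_op_def by (rule nn_integral_mono) (auto intro: mult_left_mono assms)

lemma kernel_op_mono_set: "A \<subseteq> B \<Longrightarrow> kernel_op p A f z \<le> kernel_op p B f z"
  unfolding kernel_op_def
  by (subst (1 2) nn_integral_count_space_indicator)
     (auto intro!: nn_integral_mono simp: indicator_def)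

lemma kernel_op_add: "kernel_op p A (\<lambda>y. f y + g y) z = kernel_op p A f z + kernel_op p A g z"
  unfolding kernel_op_def by (simp add: distrib_left nn_integral_add)

lemma kernel_op_cmult: "kernel_op p A (\<lambda>y. c * f y) z = c * kernel_op p A f z"
  unfolding kernel_op_def by (simp add: nn_integral_cmult[symmetric] mult.left_commute)

lemma kernel_op_sum: "kernel_op p A (\<lambda>y. \<Sum>i\<in>I. f i y) z = (\<Sum>i\<in>I. kernel_op p A (f i) z)"
  unfolding kernel_op_def by (simp add: sum_distrib_left nn_integral_sum)

lemma kernel_op_power_mono:
  assumes "\<And>y. y \<in> S \<Longrightarrow> f y \<le> g y" "A \<subseteq> S" "z \<in> S"
  shows "(kernel_op p A ^^ n) f z \<le> (kernel_op p A ^^ n) g z"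
  using assms(3)
proof (induction n arbitrary: z)
  case 0
  then show ?case using assms(1) by simp
next
  case (Suc n)
  then show ?case using assms(2) by (auto intro!: kernel_op_mono)
qed

lemma kernel_op_power_add:
  "(kernel_op p A ^^ n) (\<lambda>y. f y + g y) z = (kernel_op p A ^^ n) f z + (kernel_op p A ^^ n) g z"
proof (induction n arbitrary: z)
  case (Suc n)
  then have "(kernel_op p A ^^ n) (\<lambda>y. f y + g y)
      = (\<lambda>y. (kernel_op p A ^^ n) f y + (kernel_op p A ^^ n) g y)"
    by auto
  then show ?case by (simp add: kernel_op_add)
qed simp

lemma kernel_op_power_cmult: "(kernel_op p A ^^ n) (\<lambda>y. c * f y) z = c * (kernel_op p A ^^ n) f z"
proof (induction n arbitrary: z)
  case (Suc n)
  then have "(kernel_op p A ^^ n) (\<lambda>y. c * f y) = (\<lambda>y. c * (kernel_op p A ^^ n) f y)"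
    by auto
  then show ?case by (simp add: kernel_op_cmult)
qed simp

lemma kernel_op_power_sum:
  "(kernel_op p A ^^ n) (\<lambda>y. \<Sum>i\<in>I. f i y) z = (\<Sum>i\<in>I. (kernel_op p A ^^ n) (f i) z)"
proof (induction n arbitrary: z)
  case (Suc n)
  then have "(kernel_op p A ^^ n) (\<lambda>y. \<Sum>i\<in>I. f i y) = (\<lambda>y. \<Sum>i\<in>I. (kernel_op p A ^^ n) (f i) y)"
    by auto
  then show ?case by (simp add: kernel_op_sum)
qed simp

lemma sum_lessThan_add: "(\<Sum>n<a + b. g n) = (\<Sum>n<a. g n) + (\<Sum>n<b. g (a + n))"
  for g :: "nat \<Rightarrow> 'a::comm_monoid_add"
  by (induction b) (simp_all add: add.assoc)

section \<open>Hitting times of a Markov kernel\<close>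

text \<open>
  \<open>p\<close> is a stochastic kernel on \<open>S\<close>, and \<open>taboo\<close> is \<open>p\<close> with the target state \<open>x\<close> removed,
  so \<open>(taboo ^^ n) (\<lambda>_. 1) z\<close> is the probability, started in \<open>z\<close>, that the steps \<open>1, \<dots>, n\<close>
  all avoid \<open>x\<close>.
\<close>
locale taboo_kernel =
  fixes p :: "'s \<Rightarrow> 's \<Rightarrow> ennreal" and S :: "'s set" and x :: 's
  assumes kernel_outside: "\<And>z y. z \<notin> S \<Longrightarrow> p z y = 0"
    and stochastic: "\<And>z. z \<in> S \<Longrightarrow> kernel_op p S (\<lambda>_. 1) z = 1"
    and target_in: "x \<in> S"
begin

abbreviation "taboo \<equiv> kernel_op p (S - {x})"
abbreviation "step \<equiv> kernel_op p S"

text \<open>\<open>E\<^sub>z[min(\<tau>, N)]\<close> for the first hitting time \<open>\<tau> \<ge> 1\<close> of \<open>x\<close>.\<close>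
definition hit_time_trunc :: "nat \<Rightarrow> 's \<Rightarrow> ennreal" where
  "hit_time_trunc N z = (\<Sum>n<N. (taboo ^^ n) (\<lambda>_. 1) z)"

lemma kernel_op_outside: "z \<notin> S \<Longrightarrow> kernel_op p A g z = 0"
  unfolding kernel_op_def using kernel_outside by simp

lemma taboo_one_le: "taboo (\<lambda>_. 1) z \<le> 1"
proof (cases "z \<in> S")
  case True
  have "taboo (\<lambda>_. 1) z \<le> step (\<lambda>_. 1) z" by (rule kernel_op_mono_set) auto
  then show ?thesis using stochastic True by simp
qed (simp add: kernel_op_outside)

lemma taboo_power_one_le: "(taboo ^^ n) (\<lambda>_. 1) z \<le> 1"
proof (induction n arbitrary: z)
  case (Suc n)
  then have "(taboo ^^ Suc n) (\<lambda>_. 1) z \<le> taboo (\<lambda>_. 1) z"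
    by (auto intro!: kernel_op_mono)
  also have "\<dots> \<le> 1" by (rule taboo_one_le)
  finally show ?case .
qed simp

lemma taboo_power_one_antimono:
  assumes "k \<le> n"
  shows "(taboo ^^ n) (\<lambda>_. 1) z \<le> (taboo ^^ k) (\<lambda>_. 1) z"
proof -
  obtain j where n: "n = k + j" using assms le_Suc_ex by blast
  have "(taboo ^^ n) (\<lambda>_. 1) z = (taboo ^^ k) ((taboo ^^ j) (\<lambda>_. 1)) z"
    by (simp add: n funpow_add)
  also have "\<dots> \<le> (taboo ^^ k) (\<lambda>_. 1) z"
    by (rule kernel_op_power_mono[where S=UNIV]) (auto intro: taboo_power_one_le)
  finally show ?thesis .
qed

lemma taboo_power_le_step_power: "(taboo ^^ j) V z \<le> (step ^^ j) V z"
proof (induction j arbitrary: z)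
  case (Suc j)
  then have "(taboo ^^ Suc j) V z \<le> taboo ((step ^^ j) V) z"
    by (simp add: kernel_op_mono)
  also have "\<dots> \<le> step ((step ^^ j) V) z" by (rule kernel_op_mono_set) auto
  finally show ?case by simp
qed simp

lemma step_power_drift:
  assumes "\<And>z. z \<in> S \<Longrightarrow> step V z \<le> V z + ennreal D" and "z \<in> S"
  shows "(step ^^ j) V z \<le> V z + of_nat j * ennreal D"
  using assms(2)
proof (induction j arbitrary: z)
  case (Suc j)
  have "(step ^^ Suc j) V z \<le> step (\<lambda>y. V y + of_nat j * ennreal D) z"
    using Suc by (auto intro!: kernel_op_mono)
  also have "\<dots> = step V z + of_nat j * ennreal D * step (\<lambda>_. 1) z"
    using kernel_op_add[of p S V] kernel_op_cmult[of p S "of_nat j * ennreal D" "\<lambda>_. 1"] by simp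
  also have "\<dots> \<le> V z + ennreal D + of_nat j * ennreal D"
    using Suc.prems stochastic assms(1) by (simp add: add_right_mono)
  finally show ?case by (simp add: algebra_simps)
qed simp

lemma hit_time_trunc_le: "hit_time_trunc N z \<le> of_nat N"
proof -
  have "hit_time_trunc N z \<le> (\<Sum>n<N. 1)"
    unfolding hit_time_trunc_def by (rule sum_mono) (rule taboo_power_one_le)
  then show ?thesis by simp
qed

lemma hit_time_trunc_add:
  "hit_time_trunc (a + b) z = hit_time_trunc a z + (taboo ^^ a) (hit_time_trunc b) z"
proof -
  have "(taboo ^^ a) (hit_time_trunc b) z = (\<Sum>n<b. (taboo ^^ a) ((taboo ^^ n) (\<lambda>_. 1)) z)"
    unfolding hit_time_trunc_def by (rule kernel_op_power_sum)
  also have "\<dots> = (\<Sum>n<b. (taboo ^^ (a + n)) (\<lambda>_. 1) z)"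
    by (simp add: funpow_add)
  finally show ?thesis unfolding hit_time_trunc_def by (simp add: sum_lessThan_add)
qed

lemma taboo_escape_plus_hit: "z \<in> S \<Longrightarrow> taboo (\<lambda>_. 1) z + p z x = 1"
proof -
  assume "z \<in> S"
  have "taboo (\<lambda>_. 1) z + p z x =
      (\<integral>\<^sup>+ y. p z y * indicator (S - {x}) y \<partial>count_space UNIV)
    + (\<integral>\<^sup>+ y. p z y * indicator {x} y \<partial>count_space UNIV)"
    unfolding kernel_op_def by (simp add: nn_integral_count_space_indicator)
  also have "\<dots> = (\<integral>\<^sup>+ y. p z y * indicator S y \<partial>count_space UNIV)"
    by (subst nn_integral_add[symmetric])
       (auto intro!: nn_integral_cong simp: indicator_def target_in)
  also have "\<dots> = step (\<lambda>_. 1) z"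
    unfolding kernel_op_def by (simp add: nn_integral_count_space_indicator)
  finally show ?thesis using stochastic \<open>z \<in> S\<close> by simp
qed

lemma taboo_escape_step:
  assumes "z' \<in> S - {x}" "(taboo ^^ k) (\<lambda>_. 1) z' + q \<le> 1"
  shows "(taboo ^^ Suc k) (\<lambda>_. 1) z + p z z' * q \<le> 1"
proof -
  have "taboo (\<lambda>y. q * indicator {z'} y) z
      = (\<integral>\<^sup>+ y. (p z z' * q) * indicator {z'} y \<partial>count_space UNIV)"
    unfolding kernel_op_def using assms(1)
    by (subst nn_integral_count_space_indicator)
       (auto intro!: nn_integral_cong simp: indicator_def)
  then have "p z z' * q = taboo (\<lambda>y. q * indicator {z'} y) z"
    by (simp add: nn_integral_cmult_indicator)
  then have "(taboo ^^ Suc k) (\<lambda>_. 1) z + p z z' * q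
      = taboo (\<lambda>y. (taboo ^^ k) (\<lambda>_. 1) y + q * indicator {z'} y) z"
    by (simp add: kernel_op_add)
  also have "\<dots> \<le> taboo (\<lambda>_. 1) z"
    using assms taboo_power_one_le by (intro kernel_op_mono) (auto simp: indicator_def)
  also have "\<dots> \<le> 1" by (rule taboo_one_le)
  finally show ?thesis .
qed

lemma hits_target_with_positive_prob:
  assumes irr: "\<And>z. z \<in> S \<Longrightarrow> (z, x) \<in> {(a, b). a \<in> S \<and> b \<in> S \<and> a \<noteq> b \<and> p a b > 0}\<^sup>*"
    and succ: "\<exists>y. y \<in> S \<and> y \<noteq> x \<and> p x y > 0"
    and "z \<in> S"
  shows "\<exists>k\<ge>1. \<exists>q>0. (taboo ^^ k) (\<lambda>_. 1) z + ennreal q \<le> 1"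
proof -
  let ?R = "{(a, b). a \<in> S \<and> b \<in> S \<and> a \<noteq> b \<and> p a b > 0}"
  let ?hits = "\<lambda>z. \<exists>k\<ge>1. \<exists>q>0. (taboo ^^ k) (\<lambda>_. 1) z + q \<le> (1::ennreal)"
  have hits_pred: "?hits y" if yw: "(y, w) \<in> ?R" and w: "w = x \<or> ?hits w" for y w
  proof (cases "w = x")
    case True
    then have "(taboo ^^ 1) (\<lambda>_. 1) y + p y w \<le> 1" using taboo_escape_plus_hit yw by simp
    then show ?thesis using yw True by (intro exI[of _ 1] exI[of _ "p y w"]) auto
  next
    case False
    then obtain k q where kq: "k \<ge> 1" "q > 0" "(taboo ^^ k) (\<lambda>_. 1) w + q \<le> 1" using w by blast
    have "(taboo ^^ Suc k) (\<lambda>_. 1) y + p y w * q \<le> 1"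
      using False yw kq by (intro taboo_escape_step) auto
    moreover have "p y w * q > 0" using yw kq by (simp add: ennreal_zero_less_mult_iff)
    ultimately show ?thesis by (intro exI[of _ "Suc k"] exI[of _ "p y w * q"]) auto
  qed
  have path: "y = x \<or> ?hits y" if "(y, x) \<in> ?R\<^sup>*" for y
    using that
  proof (induction rule: converse_rtrancl_induct)
    case (step a b)
    then show ?case using hits_pred[of a b] by blast
  qed simp
  have "?hits z"
  proof (cases "z = x")
    case True
    obtain y where y: "y \<in> S" "y \<noteq> x" "p x y > 0" using succ by blast
    then have "(x, y) \<in> ?R" using target_in by auto
    moreover have "y = x \<or> ?hits y" using path[OF irr[OF \<open>y \<in> S\<close>]] .
    ultimately show ?thesis using True hits_pred[of x y] by simp
  next
    case False
    then show ?thesis using path[OF irr[OF \<open>z \<in> S\<close>]] by simp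
  qed
  then obtain k q where kq: "k \<ge> 1" "q > 0" "(taboo ^^ k) (\<lambda>_. 1) z + q \<le> 1" by blast
  have "q \<le> (taboo ^^ k) (\<lambda>_. 1) z + q" by (rule add_increasing) auto
  then have "q \<le> 1" using kq(3) by (rule order_trans)
  then have "q = ennreal (enn2real q)" "enn2real q > 0"
    using kq(2) by (auto simp: ennreal_enn2real_if enn2real_positive_iff top_unique
        less_top_ennreal[symmetric] order_le_less_trans)
  then show ?thesis using kq by (intro exI[of _ k] exI[of _ "enn2real q"]) auto
qed

lemma hits_uniformly_on_finite:
  assumes "finite F"
    and hits: "\<And>z. z \<in> S \<Longrightarrow> \<exists>k\<ge>1. \<exists>q>0. (taboo ^^ k) (\<lambda>_. 1) z + ennreal q \<le> 1"
  shows "\<exists>n\<ge>1. \<exists>q>0. q \<le> 1 \<and> (\<forall>f\<in>F \<inter> S. (taboo ^^ n) (\<lambda>_. 1) f + ennreal q \<le> 1)"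
  using assms(1)
proof (induction F rule: finite_induct)
  case empty
  then show ?case by (intro exI[of _ 1]) (auto intro: exI[of _ "1::real"])
next
  case (insert f F)
  then obtain n1 q1 where n1: "n1 \<ge> 1" "q1 > 0" "q1 \<le> 1"
    "\<forall>g\<in>F \<inter> S. (taboo ^^ n1) (\<lambda>_. 1) g + ennreal q1 \<le> 1"
    by blast
  show ?case
  proof (cases "f \<in> S")
    case False
    then show ?thesis using n1 by auto
  next
    case True
    then obtain k q2 where k: "k \<ge> 1" "q2 > 0" "(taboo ^^ k) (\<lambda>_. 1) f + ennreal q2 \<le> 1"
      using hits by blast
    let ?n = "max n1 k" and ?q = "min q1 q2"
    have "\<forall>g\<in>insert f F \<inter> S. (taboo ^^ ?n) (\<lambda>_. 1) g + ennreal ?q \<le> 1"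
    proof
      fix g assume g: "g \<in> insert f F \<inter> S"
      show "(taboo ^^ ?n) (\<lambda>_. 1) g + ennreal ?q \<le> 1"
    proof (cases "g = f")
      case True
      have "(taboo ^^ ?n) (\<lambda>_. 1) f + ennreal ?q \<le> (taboo ^^ k) (\<lambda>_. 1) f + ennreal q2"
        by (intro add_mono taboo_power_one_antimono ennreal_leI) auto
      then show ?thesis using k True by simp
    next
      case False
      then have "g \<in> F \<inter> S" using g by auto
      have "(taboo ^^ ?n) (\<lambda>_. 1) g + ennreal ?q \<le> (taboo ^^ n1) (\<lambda>_. 1) g + ennreal q1"
        by (intro add_mono taboo_power_one_antimono ennreal_leI) auto
      also have "\<dots> \<le> 1" using n1(4) \<open>g \<in> F \<inter> S\<close> by blast
      finally show ?thesis .
    qed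
    qed
    moreover have "?n \<ge> 1" "?q > 0" "?q \<le> 1" using n1 k by auto
    ultimately show ?thesis by blast
  qed
qed

lemma hit_time_trunc_step_outside:
  assumes "z \<in> S" "step V z + 1 \<le> V z" and IH: "\<forall>y\<in>S. hit_time_trunc N y \<le> V y + B"
  shows "hit_time_trunc (Suc N) z \<le> V z + B"
proof -
  have "hit_time_trunc (Suc N) z = 1 + taboo (hit_time_trunc N) z"
    using hit_time_trunc_add[of 1 N z] by (simp add: hit_time_trunc_def)
  also have "taboo (hit_time_trunc N) z \<le> taboo (\<lambda>y. V y + B) z"
    using IH by (auto intro!: kernel_op_mono)
  also have "taboo (\<lambda>y. V y + B) z = taboo V z + B * taboo (\<lambda>_. 1) z"
    using kernel_op_add[of p "S - {x}" V] kernel_op_cmult[of p "S - {x}" B "\<lambda>_. 1"] by simp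
  also have "\<dots> \<le> step V z + B"
    by (intro add_mono kernel_op_mono_set) (auto intro: mult_left_le taboo_one_le)
  finally have "hit_time_trunc (Suc N) z \<le> 1 + step V z + B" by (simp add: add.assoc add_left_mono)
  also have "\<dots> \<le> V z + B" using assms(2) by (simp add: add_right_mono add.commute)
  finally show ?thesis .
qed

text \<open>On the finite exceptional set one waits \<open>n\<close> steps, during which the target is hit with
  probability at least \<open>q\<close>; this pays for the possible growth \<open>n D\<close> of \<open>V\<close>.\<close>
lemma hit_time_trunc_step_inside:
  assumes "z \<in> S" and hit: "(taboo ^^ n) (\<lambda>_. 1) z + ennreal q \<le> 1"
    and drift: "\<And>z. z \<in> S \<Longrightarrow> step V z \<le> V z + ennreal D"
    and B: "B * ennreal q = of_nat n + of_nat n * ennreal D"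
    and IH: "\<forall>y\<in>S. hit_time_trunc j y \<le> V y + B"
  shows "hit_time_trunc (n + j) z \<le> V z + B"
proof -
  have "(taboo ^^ n) (hit_time_trunc j) z \<le> (taboo ^^ n) (\<lambda>y. V y + B) z"
    using IH \<open>z \<in> S\<close> by (intro kernel_op_power_mono[where S=S]) auto
  also have "\<dots> = (taboo ^^ n) V z + B * (taboo ^^ n) (\<lambda>_. 1) z"
    using kernel_op_power_add[where A="S - {x}" and f=V and g="\<lambda>_. B"]
      kernel_op_power_cmult[where A="S - {x}" and c=B and f="\<lambda>_. 1"] by simp
  also have "(taboo ^^ n) V z \<le> V z + of_nat n * ennreal D"
    using taboo_power_le_step_power step_power_drift[OF drift \<open>z \<in> S\<close>] by (rule order_trans)
  finally have "hit_time_trunc (n + j) z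
      \<le> of_nat n + (V z + of_nat n * ennreal D + B * (taboo ^^ n) (\<lambda>_. 1) z)"
    unfolding hit_time_trunc_add by (intro add_mono hit_time_trunc_le) (simp_all add: add_right_mono)
  also have "\<dots> = V z + B * ((taboo ^^ n) (\<lambda>_. 1) z + ennreal q)"
    by (simp only: B distrib_left ac_simps)
  also have "\<dots> \<le> V z + B * 1"
    using hit by (intro add_left_mono mult_left_mono) auto
  finally show ?thesis by simp
qed

lemma foster_hit_time_bound:
  assumes hits: "\<And>z. z \<in> S \<Longrightarrow> \<exists>k\<ge>1. \<exists>q>0. (taboo ^^ k) (\<lambda>_. 1) z + ennreal q \<le> 1"
    and "finite F"
    and drift_out: "\<And>z. z \<in> S - F \<Longrightarrow> step V z + 1 \<le> V z"
    and drift: "\<And>z. z \<in> S \<Longrightarrow> step V z \<le> V z + ennreal D" and "D \<ge> 0"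
  shows "\<exists>B<\<infinity>. \<forall>N. \<forall>z\<in>S. hit_time_trunc N z \<le> V z + B"
proof -
  obtain n q where nq: "n \<ge> 1" "q > 0" "q \<le> 1"
    and hit: "\<And>f. f \<in> F \<inter> S \<Longrightarrow> (taboo ^^ n) (\<lambda>_. 1) f + ennreal q \<le> 1"
    using hits_uniformly_on_finite[OF \<open>finite F\<close> hits] by blast
  define B where "B = ennreal (real n * (1 + D) / q)"
  have B: "B * ennreal q = of_nat n + of_nat n * ennreal D"
  proof -
    have "B * ennreal q = ennreal (real n * (1 + D) / q * q)"
      unfolding B_def using nq \<open>D \<ge> 0\<close> by (simp add: ennreal_mult[symmetric])
    also have "real n * (1 + D) / q * q = real n + real n * D"
      using nq by (simp add: field_simps)
    finally show ?thesis
      using \<open>D \<ge> 0\<close> by (simp add: ennreal_plus ennreal_mult' ennreal_of_nat_eq_real_of_nat)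
  qed
  have n_le_B: "of_nat n \<le> B"
  proof -
    have "real n * q \<le> real n * (1 + D)" using nq \<open>D \<ge> 0\<close> by (intro mult_left_mono) auto
    then have "real n \<le> real n * (1 + D) / q" using nq by (simp add: le_divide_eq)
    then show ?thesis unfolding B_def by (metis ennreal_leI ennreal_of_nat_eq_real_of_nat)
  qed
  have "\<forall>z\<in>S. hit_time_trunc N z \<le> V z + B" for N
  proof (induction N rule: less_induct)
    case (less N)
    show ?case
    proof
      fix z assume "z \<in> S"
      consider "z \<notin> F" "N > 0" | "N = 0" | "z \<in> F" "N \<le> n" | "z \<in> F" "n < N" by fastforce
      then show "hit_time_trunc N z \<le> V z + B"
      proof cases
        case 1
        then show ?thesis using less \<open>z \<in> S\<close> drift_out
          by (metis Diff_iff Suc_pred lessI hit_time_trunc_step_outside)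
      next
        case 2
        then show ?thesis by (simp add: hit_time_trunc_def)
      next
        case 3
        have "hit_time_trunc N z \<le> of_nat n"
          using hit_time_trunc_le[of N z] 3 by (meson of_nat_mono order_trans)
        then show ?thesis using n_le_B by (meson add_increasing order_trans zero_le)
      next
        case 4
        have "hit_time_trunc (n + (N - n)) z \<le> V z + B"
          using 4 \<open>z \<in> S\<close> nq less
          by (intro hit_time_trunc_step_inside[OF \<open>z \<in> S\<close> hit[of z] drift B]) auto

        then show ?thesis using 4 by simp
      qed
    qed
  qed
  moreover have "B < \<infinity>" unfolding B_def by simp
  ultimately show ?thesis by blast
qed

end

context taboo_kernel
begin

text \<open>The probability, started in \<open>x\<close>, that the first return to \<open>x\<close> happens at step \<open>n + 1\<close>.\<close>
definition first_return :: "nat \<Rightarrow> ennreal" where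
  "first_return n = (taboo ^^ n) (\<lambda>w. p w x) x"

lemma first_return_plus_escape:
  "first_return n + (taboo ^^ Suc n) (\<lambda>_. 1) x = (taboo ^^ n) (\<lambda>_. 1) x"
proof -
  have "first_return n + (taboo ^^ Suc n) (\<lambda>_. 1) x = (taboo ^^ n) (\<lambda>w. p w x + taboo (\<lambda>_. 1) w) x"
    unfolding first_return_def by (simp add: kernel_op_power_add funpow_Suc_right del: funpow.simps)
  also have "\<dots> = (taboo ^^ n) (\<lambda>_. 1) x"
    using taboo_escape_plus_hit target_in
    by (intro antisym kernel_op_power_mono[where S=S]) (auto simp: add.commute)
  finally show ?thesis .
qed

lemma first_return_sum: "(\<Sum>n<N. first_return n) + (taboo ^^ N) (\<lambda>_. 1) x = 1"
proof (induction N)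
  case (Suc N)
  then show ?case using first_return_plus_escape[of N] by (simp add: add.assoc del: funpow.simps)
qed simp

lemma first_return_moment_sum:
  "(\<Sum>n<N. of_nat (Suc n) * first_return n) + of_nat N * (taboo ^^ N) (\<lambda>_. 1) x
    = hit_time_trunc N x"
proof (induction N)
  case (Suc N)
  have "(\<Sum>n<Suc N. of_nat (Suc n) * first_return n) + of_nat (Suc N) * (taboo ^^ Suc N) (\<lambda>_. 1) x
      = (\<Sum>n<N. of_nat (Suc n) * first_return n)
        + of_nat (Suc N) * (first_return N + (taboo ^^ Suc N) (\<lambda>_. 1) x)"
    by (simp add: distrib_left add.assoc)
  also have "\<dots> = ((\<Sum>n<N. of_nat (Suc n) * first_return n) + of_nat N * (taboo ^^ N) (\<lambda>_. 1) x)
        + (taboo ^^ N) (\<lambda>_. 1) x"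
    by (simp only: first_return_plus_escape of_nat_Suc distrib_right mult_1 ac_simps)
  also have "\<dots> = hit_time_trunc (Suc N) x" using Suc by (simp add: hit_time_trunc_def)
  finally show ?case .
qed (simp add: hit_time_trunc_def)

text \<open>A finite bound on the truncated hitting times forces the escape probabilities
  \<open>(taboo ^^ N) (\<lambda>_. 1) x \<le> Bd / N\<close> to vanish, so the chain returns almost surely, and bounds
  the expected return time.\<close>
lemma first_return_moments:
  assumes Bd: "Bd < \<infinity>" "\<And>N. hit_time_trunc N x \<le> Bd"
  shows "(\<Sum>n. first_return n) = 1" "(\<Sum>n. of_nat (Suc n) * first_return n) \<le> Bd"
proof -
  show "(\<Sum>n. of_nat (Suc n) * first_return n) \<le> Bd"
    unfolding suminf_eq_SUP
  proof (intro SUP_least)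
    fix N
    have "(\<Sum>n<N. of_nat (Suc n) * first_return n) \<le> hit_time_trunc N x"
      unfolding first_return_moment_sum[symmetric] by (rule add_increasing2) auto
    then show "(\<Sum>n<N. of_nat (Suc n) * first_return n) \<le> Bd" using Bd(2) by (rule order_trans)
  qed
  show "(\<Sum>n. first_return n) = 1"
  proof (rule antisym)
    show "(\<Sum>n. first_return n) \<le> 1"
      unfolding suminf_eq_SUP
    proof (intro SUP_least)
      fix N
      have "(\<Sum>n<N. first_return n) \<le> (\<Sum>n<N. first_return n) + (taboo ^^ N) (\<lambda>_. 1) x"
        by (rule add_increasing2) auto
      then show "(\<Sum>n<N. first_return n) \<le> 1" by (simp only: first_return_sum)
    qed
    show "1 \<le> (\<Sum>n. first_return n)"
    proof (rule ennreal_le_epsilon)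
      fix e :: real assume "0 < e"
      obtain r where r: "Bd = ennreal r" "r \<ge> 0" using Bd(1) by (cases Bd) auto
      obtain N :: nat where N: "r / e < real N" using reals_Archimedean2 by blast
      then have "N > 0" using r \<open>0 < e\<close> by (cases N) (auto simp: divide_less_0_iff)
      have "(taboo ^^ N) (\<lambda>_. 1) x \<le> 1" by (rule taboo_power_one_le)
      then obtain t where t: "(taboo ^^ N) (\<lambda>_. 1) x = ennreal t" "t \<ge> 0"
        by (cases "(taboo ^^ N) (\<lambda>_. 1) x") (auto simp: top_unique)
      have "of_nat N * (taboo ^^ N) (\<lambda>_. 1) x \<le> hit_time_trunc N x"
        unfolding first_return_moment_sum[symmetric] by (rule add_increasing) auto
      also have "\<dots> \<le> Bd" by (rule Bd(2))
      finally have "ennreal (t * real N) \<le> ennreal r"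
        using t r by (simp add: ennreal_mult ennreal_of_nat_eq_real_of_nat mult.commute)
      then have "t * real N \<le> r" using r by (simp add: ennreal_le_iff)
      moreover have "r < e * real N" using N \<open>0 < e\<close> by (simp add: pos_divide_less_eq mult.commute)
      ultimately have "t * real N < e * real N" by linarith
      then have "t \<le> e" using \<open>N > 0\<close> by (simp add: mult_less_cancel_right)
      have "1 = (\<Sum>n<N. first_return n) + (taboo ^^ N) (\<lambda>_. 1) x" using first_return_sum by simp
      also have "\<dots> \<le> (\<Sum>n. first_return n) + ennreal e"
        using \<open>t \<le> e\<close> t by (intro add_mono sum_le_suminf) (auto simp: summableI)
      finally show "1 \<le> (\<Sum>n. first_return n) + ennreal e" .
    qed
  qed
qed

end

section \<open>Paths of the embedded jump chain\<close>

definition path_weight :: "('s \<Rightarrow> 's \<Rightarrow> ennreal) \<Rightarrow> 's list \<Rightarrow> ennreal" where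
  "path_weight p xs = (\<Prod>i<length xs - 1. p (xs ! i) (xs ! Suc i))"

lemma path_weight_single [simp]: "path_weight p [a] = 1"
  by (simp add: path_weight_def)

lemma path_weight_Cons_Cons: "path_weight p (a # b # ys) = p a b * path_weight p (b # ys)"
  unfolding path_weight_def by (simp del: prod.lessThan_Suc add: prod.lessThan_Suc_shift)

lemma path_weight_snoc: "xs \<noteq> [] \<Longrightarrow> path_weight p (xs @ [a]) = path_weight p xs * p (last xs) a"
proof (induction xs rule: induct_list012)
  case (2 b)
  then show ?case by (simp add: path_weight_def)
next
  case (3 b c rest)
  then show ?case by (simp add: path_weight_Cons_Cons mult.assoc)
qed simp

lemma path_prob_eq_path_weight: "path_prob q S xs = path_weight (jump_prob q S) xs"
  by (simp add: path_prob_def path_weight_def)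

definition lists_in :: "'s set \<Rightarrow> nat \<Rightarrow> 's list set" where
  "lists_in A n = {ys. length ys = n \<and> set ys \<subseteq> A}"

lemma bij_betw_Cons_lists_in:
  "bij_betw (\<lambda>(y, ys). y # ys) (A \<times> lists_in A n) (lists_in A (Suc n))"
  unfolding bij_betw_def inj_on_def lists_in_def
proof (intro conjI ballI impI)
  show "(\<lambda>(y, ys). y # ys) ` (A \<times> {ys. length ys = n \<and> set ys \<subseteq> A})
      = {ys. length ys = Suc n \<and> set ys \<subseteq> A}"
  proof (intro set_eqI iffI)
    fix ys assume "ys \<in> {ys. length ys = Suc n \<and> set ys \<subseteq> A}"
    then show "ys \<in> (\<lambda>(y, ys). y # ys) ` (A \<times> {ys. length ys = n \<and> set ys \<subseteq> A})"
      by (cases ys) (auto intro!: image_eqI[where x="(hd ys, tl ys)"])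
  qed auto
qed auto

lemma nn_integral_path_weight:
  "(\<integral>\<^sup>+ ys. path_weight p (z # ys) * g (last (z # ys)) \<partial>count_space (lists_in A n))
    = (kernel_op p A ^^ n) g z"
proof (induction n arbitrary: z)
  case 0
  have "lists_in A 0 = {[]}" by (auto simp: lists_in_def)
  then show ?case by (simp add: nn_integral_count_space_finite)
next
  case (Suc n)
  define F where "F yys = p z (fst yys) * path_weight p (fst yys # snd yys)
      * g (last (fst yys # snd yys)) * indicator (A \<times> lists_in A n) yys" for yys
  have "(\<integral>\<^sup>+ ys. path_weight p (z # ys) * g (last (z # ys)) \<partial>count_space (lists_in A (Suc n)))
      = (\<integral>\<^sup>+ yys. path_weight p (z # fst yys # snd yys) * g (last (fst yys # snd yys))
          \<partial>count_space (A \<times> lists_in A n))"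
    by (subst nn_integral_bij_count_space[OF bij_betw_Cons_lists_in, symmetric])
       (simp add: case_prod_beta)
  also have "\<dots> = integral\<^sup>N (count_space UNIV) F"
    by (subst nn_integral_count_space_indicator)
       (auto intro!: nn_integral_cong simp: F_def path_weight_Cons_Cons mult.assoc)
  also have "\<dots> = (\<integral>\<^sup>+ y. \<integral>\<^sup>+ ys. F (y, ys) \<partial>count_space UNIV \<partial>count_space UNIV)"
    by (rule nn_integral_fst_count_space[symmetric])
  also have "\<dots> = (\<integral>\<^sup>+ y. p z y * indicator A y * (\<integral>\<^sup>+ ys. path_weight p (y # ys)
          * g (last (y # ys)) * indicator (lists_in A n) ys \<partial>count_space UNIV) \<partial>count_space UNIV)"
    unfolding F_def
    by (intro nn_integral_cong, subst nn_integral_cmult[symmetric])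
       (auto intro!: nn_integral_cong simp: indicator_times ac_simps)
  also have "\<dots> = (\<integral>\<^sup>+ y. p z y * indicator A y * (kernel_op p A ^^ n) g y \<partial>count_space UNIV)"
    using Suc by (simp add: nn_integral_count_space_indicator[symmetric])
  also have "\<dots> = (kernel_op p A ^^ Suc n) g z"
    by (simp add: kernel_op_def nn_integral_count_space_indicator ac_simps)
  finally show ?case .
qed

lemma nn_integral_excursions:
  "(\<integral>\<^sup>+ ys. f ys \<partial>count_space (excursions S x))
    = (\<Sum>n. \<integral>\<^sup>+ ys. f ys \<partial>count_space (lists_in (S - {x}) n))"
proof -
  have "excursions S x = (\<Union>n. lists_in (S - {x}) n)"
    unfolding excursions_def lists_in_def by auto
  moreover have "disjoint_family (lists_in A)" for A :: "'a set"
    unfolding disjoint_family_on_def lists_in_def by auto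
  ultimately show ?thesis
    by (simp add: nn_integral_count_space_indicator nn_integral_disjoint_family)
qed

lemma sum_list_map_le_length_mult:
  "(\<And>z. z \<in> set zs \<Longrightarrow> f z \<le> c) \<Longrightarrow> sum_list (map f zs) \<le> of_nat (length zs) * (c::ennreal)"
  by (induction zs) (auto simp: distrib_right intro: add_mono)

section \<open>Foster's criterion for continuous-time chains\<close>

lemma kernel_op_jump_prob:
  assumes "z \<in> S"
  shows "kernel_op (jump_prob q S) S V z
    = (\<integral>\<^sup>+ y. ennreal (q z y) * V y \<partial>count_space (S - {z})) / out_rate q S z"
proof -
  have "kernel_op (jump_prob q S) S V z = (\<integral>\<^sup>+ y. ennreal (q z y) * V y * indicator (S - {z}) y
      / out_rate q S z \<partial>count_space UNIV)"
    unfolding kernel_op_def using assms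
    by (subst nn_integral_count_space_indicator)
       (auto intro!: nn_integral_cong simp: jump_prob_def indicator_def ennreal_divide_times
         ennreal_times_divide mult.commute)
  also have "\<dots> = (\<integral>\<^sup>+ y. ennreal (q z y) * V y \<partial>count_space (S - {z})) / out_rate q S z"
    by (subst nn_integral_divide) (auto simp: nn_integral_count_space_indicator)
  finally show ?thesis .
qed

lemma jump_prob_stochastic:
  assumes "z \<in> S" "0 < out_rate q S z" "out_rate q S z < \<infinity>"
  shows "kernel_op (jump_prob q S) S (\<lambda>_. 1) z = 1"
  using assms ennreal_divide_self[of "out_rate q S z"]
  by (simp add: kernel_op_jump_prob out_rate_def)

text \<open>The drift condition is imposed on the embedded jump chain; exit rates bounded below by
  \<open>b\<close> turn its expected return time into a bound on the expected holding time.\<close>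
lemma ctmc_positive_recurrent_foster:
  assumes "x \<in> S" and "b > 0"
    and out: "\<And>z. z \<in> S \<Longrightarrow> ennreal b \<le> out_rate q S z \<and> out_rate q S z < \<infinity>"
    and irr: "ctmc_irreducible q S"
    and succ: "\<And>z. z \<in> S \<Longrightarrow> \<exists>y\<in>S. y \<noteq> z \<and> q z y > 0"
    and "finite F"
    and drift_out: "\<And>z. z \<in> S - F \<Longrightarrow> kernel_op (jump_prob q S) S V z + 1 \<le> V z"
    and drift: "\<And>z. z \<in> S \<Longrightarrow> kernel_op (jump_prob q S) S V z \<le> V z + ennreal D"
    and "D \<ge> 0" and "V x < \<infinity>"
  shows "ctmc_positive_recurrent q S x"
proof -
  let ?p = "jump_prob q S"
  have out_pos: "0 < out_rate q S z" if "z \<in> S" for z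
    using out[OF that] \<open>b > 0\<close> by (meson ennreal_less_zero_iff order_less_le_trans)
  interpret taboo_kernel ?p S x
    by unfold_locales (auto simp: jump_prob_def \<open>x \<in> S\<close> intro!: jump_prob_stochastic out_pos dest: out)
  have jump_pos: "?p a b > 0" if "a \<in> S" "b \<in> S" "a \<noteq> b" "q a b > 0" for a b
    using that out[of a] by (auto simp: jump_prob_def ennreal_zero_less_divide)
  have reach: "(z, x) \<in> {(a, b). a \<in> S \<and> b \<in> S \<and> a \<noteq> b \<and> ?p a b > 0}\<^sup>*" if "z \<in> S" for z
  proof -
    have "(z, x) \<in> {(a, b). a \<in> S \<and> b \<in> S \<and> a \<noteq> b \<and> q a b > 0}\<^sup>*"
      using irr that \<open>x \<in> S\<close> unfolding ctmc_irreducible_def by blast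
    moreover have "{(a, b). a \<in> S \<and> b \<in> S \<and> a \<noteq> b \<and> q a b > 0}
        \<subseteq> {(a, b). a \<in> S \<and> b \<in> S \<and> a \<noteq> b \<and> ?p a b > 0}"
      using jump_pos by auto
    ultimately show ?thesis using rtrancl_mono by blast
  qed
  have "\<exists>y. y \<in> S \<and> y \<noteq> x \<and> ?p x y > 0"
    using succ[OF \<open>x \<in> S\<close>] jump_pos \<open>x \<in> S\<close> by blast
  note hits = hits_target_with_positive_prob[OF reach this]
  obtain B where B: "B < \<infinity>" "\<And>N z. z \<in> S \<Longrightarrow> hit_time_trunc N z \<le> V z + B"
    using foster_hit_time_bound[OF hits \<open>finite F\<close> drift_out drift \<open>D \<ge> 0\<close>] by blast
  have return: "(\<Sum>n. first_return n) = 1"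
    and moment: "(\<Sum>n. of_nat (Suc n) * first_return n) \<le> V x + B"
    using first_return_moments[of "V x + B"] B \<open>V x < \<infinity>\<close> \<open>x \<in> S\<close> by auto
  have "path_prob q S (x # ys @ [x]) = path_weight ?p (x # ys) * ?p (last (x # ys)) x" for ys
    using path_weight_snoc[of "x # ys" ?p x] by (simp add: path_prob_eq_path_weight)
  then have excursion_weight: "(\<integral>\<^sup>+ ys. path_prob q S (x # ys @ [x]) * h
      \<partial>count_space (lists_in (S - {x}) n)) = first_return n * h" for n h
    unfolding first_return_def nn_integral_path_weight[symmetric]
    by (simp add: nn_integral_multc del: last.simps)
  have "return_prob q S x = (\<Sum>n. first_return n)"
    using excursion_weight[of _ 1] by (simp add: return_prob_def nn_integral_excursions)
  have holding: "1 / out_rate q S z \<le> ennreal (1 / b)" if z: "z \<in> S" for z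
  proof -
    obtain r where r: "out_rate q S z = ennreal r" "r \<ge> b"
      using out[OF z] \<open>b > 0\<close> by (cases "out_rate q S z") (auto simp: ennreal_le_iff)
    then show ?thesis using \<open>b > 0\<close> divide_ennreal[of 1 r] by (simp add: ennreal_leI frac_le)
  qed
  have "mean_return_time q S x \<le> (\<Sum>n. \<integral>\<^sup>+ ys. path_prob q S (x # ys @ [x])
      * (of_nat (Suc n) * ennreal (1 / b)) \<partial>count_space (lists_in (S - {x}) n))"
    unfolding mean_return_time_def nn_integral_excursions
  proof (intro suminf_le nn_integral_mono summableI mult_left_mono zero_le)
    fix n ys assume "ys \<in> space (count_space (lists_in (S - {x}) n))"
    then have "length ys = n" "set (x # ys) \<subseteq> S" using \<open>x \<in> S\<close> by (auto simp: lists_in_def)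
    then have "(\<Sum>z\<leftarrow>x # ys. 1 / out_rate q S z) \<le> of_nat (length (x # ys)) * ennreal (1 / b)"
      using holding by (intro sum_list_map_le_length_mult) auto
    then show "(\<Sum>z\<leftarrow>x # ys. 1 / out_rate q S z) \<le> of_nat (Suc n) * ennreal (1 / b)"
      using \<open>length ys = n\<close> by simp
  qed
  also have "\<dots> = (\<Sum>n. ennreal (1 / b) * (of_nat (Suc n) * first_return n))"
    unfolding excursion_weight by (simp add: mult_ac)
  also have "\<dots> = ennreal (1 / b) * (\<Sum>n. of_nat (Suc n) * first_return n)"
    by (rule ennreal_suminf_cmult)
  also have "\<dots> < \<infinity>"
    using moment B(1) \<open>V x < \<infinity>\<close> by (simp add: ennreal_mult_less_top order_le_less_trans)
  finally show ?thesis
    unfolding ctmc_positive_recurrent_def using \<open>return_prob q S x = _\<close> return by simp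
qed

section \<open>Geometry of the discretized torus\<close>

lemma tdist1_reflect_shift:
  assumes "s = 1 \<or> s = -1"
  shows "tdist1 Q (s * u + 2 * Q * of_int k0) = tdist1 Q u"
proof -
  have "range (\<lambda>k::int. \<bar>s * u + 2 * Q * of_int k0 - 2 * Q * of_int k\<bar>)
      = range (\<lambda>k::int. \<bar>u - 2 * Q * of_int k\<bar>)"
  proof (intro set_eqI iffI)
    fix y assume "y \<in> range (\<lambda>k::int. \<bar>s * u + 2 * Q * of_int k0 - 2 * Q * of_int k\<bar>)"
    then obtain k where k: "y = \<bar>s * u + 2 * Q * of_int k0 - 2 * Q * of_int k\<bar>" by blast
    show "y \<in> range (\<lambda>k::int. \<bar>u - 2 * Q * of_int k\<bar>)"
      using assms
    proof
      assume "s = 1"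
      then show ?thesis using k by (intro image_eqI[where x="k - k0"]) (auto simp: algebra_simps)
    next
      assume "s = -1"
      then show ?thesis
        using k by (intro image_eqI[where x="k0 - k"]) (auto simp: algebra_simps abs_minus_commute)
    qed
  next
    fix y assume "y \<in> range (\<lambda>k::int. \<bar>u - 2 * Q * of_int k\<bar>)"
    then obtain k where k: "y = \<bar>u - 2 * Q * of_int k\<bar>" by blast
    show "y \<in> range (\<lambda>k::int. \<bar>s * u + 2 * Q * of_int k0 - 2 * Q * of_int k\<bar>)"
      using assms
    proof
      assume "s = 1"
      then show ?thesis using k by (intro image_eqI[where x="k + k0"]) (auto simp: algebra_simps)
    next
      assume "s = -1"
      then show ?thesis
        using k by (intro image_eqI[where x="k0 - k"]) (auto simp: algebra_simps abs_minus_commute)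
    qed
  qed
  then show ?thesis unfolding tdist1_def by simp
qed

lemma tdist1_uminus: "tdist1 Q (- u) = tdist1 Q u"
  using tdist1_reflect_shift[of "-1" Q u 0] by simp

lemma tdist1_periodic: "tdist1 Q (u + 2 * Q * of_int k) = tdist1 Q u"
  using tdist1_reflect_shift[of 1 Q u k] by simp

lemma tdist1_zero: "tdist1 Q 0 = 0"
  unfolding tdist1_def by (rule cInf_eq_minimum[where z=0]) (auto intro: image_eqI[where x=0])

lemma torus_dist_nonneg: "torus_dist Q b b' \<ge> 0"
  by (simp add: torus_dist_def)

lemma torus_dist_self: "torus_dist Q b b = 0"
  by (simp add: torus_dist_def tdist1_zero)

lemma torus_dist_commute: "torus_dist Q b b' = torus_dist Q b' b"
proof -
  have "fst b' - fst b = - (fst b - fst b')" "snd b' - snd b = - (snd b - snd b')" by auto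
  then show ?thesis unfolding torus_dist_def by (simp only: tdist1_uminus)
qed

lemma torus_dist_translate:
  assumes "fst b - fst b' = fst d - fst d' + 2 * Q * of_int ka"
    and "snd b - snd b' = snd d - snd d' + 2 * Q * of_int kb"
  shows "torus_dist Q b b' = torus_dist Q d d'"
  unfolding torus_dist_def assms by (simp only: tdist1_periodic)

definition l_eps_values :: "(real \<Rightarrow> real) \<Rightarrow> real \<Rightarrow> real \<Rightarrow> real \<times> real \<Rightarrow> real \<times> real \<Rightarrow> real set" where
  "l_eps_values l Q eps a a' =
     {l (torus_dist Q b b') | b b'. b \<in> cell_closure eps a \<and> b' \<in> cell_closure eps a'}"

lemma l_eps_eq_Sup: "l_eps l Q eps a a' = Sup (l_eps_values l Q eps a a')"
  unfolding l_eps_def l_eps_values_def by simp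

lemma l_eps_values_commute_subset: "l_eps_values l Q eps a a' \<subseteq> l_eps_values l Q eps a' a"
proof
  fix y assume "y \<in> l_eps_values l Q eps a a'"
  then obtain b b' where "y = l (torus_dist Q b b')" "b \<in> cell_closure eps a" "b' \<in> cell_closure eps a'"
    unfolding l_eps_values_def by blast
  moreover have "torus_dist Q b b' = torus_dist Q b' b" by (rule torus_dist_commute)
  ultimately have "y = l (torus_dist Q b' b) \<and> b' \<in> cell_closure eps a' \<and> b \<in> cell_closure eps a"
    by simp
  then show "y \<in> l_eps_values l Q eps a' a" unfolding l_eps_values_def by blast
qed

lemma l_eps_values_commute: "l_eps_values l Q eps a a' = l_eps_values l Q eps a' a"
  using l_eps_values_commute_subset by blast

lemma l_eps_commute: "l_eps l Q eps a a' = l_eps l Q eps a' a"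
  by (simp add: l_eps_eq_Sup l_eps_values_commute)

lemma l_eps_values_translate_subset:
  assumes "fst a - fst a' = fst c - fst c' + 2 * Q * of_int ka"
    and "snd a - snd a' = snd c - snd c' + 2 * Q * of_int kb"
  shows "l_eps_values l Q eps a a' \<subseteq> l_eps_values l Q eps c c'"
proof
  fix y assume "y \<in> l_eps_values l Q eps a a'"
  then obtain b b' where bb: "y = l (torus_dist Q b b')"
    "b \<in> cell_closure eps a" "b' \<in> cell_closure eps a'"
    unfolding l_eps_values_def by blast
  define d where "d = (fst b - fst a + fst c, snd b - snd a + snd c)"
  define d' where "d' = (fst b' - fst a' + fst c', snd b' - snd a' + snd c')"
  have "d \<in> cell_closure eps c" "d' \<in> cell_closure eps c'"
    using bb unfolding cell_closure_def d_def d'_def by auto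
  moreover have "torus_dist Q b b' = torus_dist Q d d'"
    by (rule torus_dist_translate[where ka=ka and kb=kb])
       (use assms in \<open>auto simp: d_def d'_def algebra_simps\<close>)
  ultimately have "y = l (torus_dist Q d d') \<and> d \<in> cell_closure eps c \<and> d' \<in> cell_closure eps c'"
    using bb by simp
  then show "y \<in> l_eps_values l Q eps c c'" unfolding l_eps_values_def by blast
qed

lemma l_eps_translate:
  assumes "fst a - fst a' = fst c - fst c' + 2 * Q * of_int ka"
    and "snd a - snd a' = snd c - snd c' + 2 * Q * of_int kb"
  shows "l_eps l Q eps a a' = l_eps l Q eps c c'"
proof -
  have "l_eps_values l Q eps a a' \<subseteq> l_eps_values l Q eps c c'"
    by (rule l_eps_values_translate_subset[OF assms])
  moreover have "l_eps_values l Q eps c c' \<subseteq> l_eps_values l Q eps a a'"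
    by (rule l_eps_values_translate_subset[where ka="-ka" and kb="-kb"]) (use assms in auto)
  ultimately show ?thesis by (simp add: l_eps_eq_Sup)
qed

locale pathloss =
  fixes l :: "real \<Rightarrow> real" and Q eps :: real
  assumes l_nonneg: "\<forall>r\<ge>0. l r \<ge> 0" and l_zero: "l 0 = 1"
    and l_antimono: "\<forall>r s. 0 \<le> r \<longrightarrow> r \<le> s \<longrightarrow> l s \<le> l r"
    and eps_pos: "eps > 0"
begin

lemma l_eps_values_bounds: "y \<in> l_eps_values l Q eps a a' \<Longrightarrow> 0 \<le> y \<and> y \<le> 1"
  unfolding l_eps_values_def using l_nonneg l_antimono l_zero torus_dist_nonneg by fastforce

lemma l_eps_values_center: "l (torus_dist Q a a') \<in> l_eps_values l Q eps a a'"
  unfolding l_eps_values_def cell_closure_def using eps_pos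
  by (intro CollectI exI[of _ a] exI[of _ a']) auto

lemma l_eps_upper: "y \<in> l_eps_values l Q eps a a' \<Longrightarrow> y \<le> l_eps l Q eps a a'"
  unfolding l_eps_eq_Sup
proof (rule cSup_upper)
  show "bdd_above (l_eps_values l Q eps a a')"
    using l_eps_values_bounds by (intro bdd_aboveI[where M=1]) blast
qed

lemma l_eps_nonneg: "0 \<le> l_eps l Q eps a a'"
  using l_eps_upper[OF l_eps_values_center, of a a'] l_eps_values_bounds[OF l_eps_values_center, of a a']
  by linarith

lemma l_eps_diag: "l_eps l Q eps a a = 1"
proof (rule antisym)
  show "l_eps l Q eps a a \<le> 1"
    unfolding l_eps_eq_Sup using l_eps_values_center l_eps_values_bounds by (intro cSup_least) blast+
  show "1 \<le> l_eps l Q eps a a"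
    using l_eps_upper[OF l_eps_values_center, of a a] by (simp add: torus_dist_self l_zero)
qed

end

text \<open>Index of the cell with centre a_i - a_j, coordinates taken mod m.\<close>
definition cell_diff :: "nat \<Rightarrow> nat \<Rightarrow> nat \<Rightarrow> nat" where
  "cell_diff m j i = nat ((int (i mod m) - int (j mod m)) mod int m)
     + m * nat ((int (i div m) - int (j div m)) mod int m)"

lemma l_eps_cell_diff:
  assumes grid: "real m * eps = 2 * Q" and "m > 0"
  shows "l_eps l Q eps (cell_center eps m i) (cell_center eps m j)
       = l_eps l Q eps (cell_center eps m (cell_diff m j i)) (cell_center eps m 0)"
proof -
  define r1 where "r1 = (int (i mod m) - int (j mod m)) mod int m"
  define r2 where "r2 = (int (i div m) - int (j div m)) mod int m"
  have r1: "0 \<le> r1" "r1 < int m" and r2: "0 \<le> r2" "r2 < int m"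
    using \<open>m > 0\<close> by (auto simp: r1_def r2_def)
  have cell_diff: "cell_diff m j i = nat r1 + m * nat r2"
    by (simp add: cell_diff_def r1_def r2_def)
  have mod_eq: "(nat r1 + m * nat r2) mod m = nat r1" using r1 by (simp add: nat_less_iff)
  have div_eq: "(nat r1 + m * nat r2) div m = nat r2" using r1 \<open>m > 0\<close> by (simp add: nat_less_iff)
  define k1 where "k1 = (int (i mod m) - int (j mod m)) div int m"
  define k2 where "k2 = (int (i div m) - int (j div m)) div int m"
  have "int (i mod m) - int (j mod m) = r1 + int m * k1"
    unfolding r1_def k1_def by simp
  from arg_cong[OF this, of real_of_int]
  have k1: "real (i mod m) - real (j mod m) = real (nat r1) + real m * of_int k1"
    using r1 by simp
  have "int (i div m) - int (j div m) = r2 + int m * k2"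
    unfolding r2_def k2_def by simp
  from arg_cong[OF this, of real_of_int]
  have k2: "real (i div m) - real (j div m) = real (nat r2) + real m * of_int k2"
    using r2 by simp
  show ?thesis
    unfolding cell_diff
  proof (rule l_eps_translate[where ka=k1 and kb=k2])
    show "fst (cell_center eps m i) - fst (cell_center eps m j) =
      fst (cell_center eps m (nat r1 + m * nat r2)) - fst (cell_center eps m 0) + 2 * Q * of_int k1"
      unfolding cell_center_def mod_eq using k1 grid[symmetric]
      by (simp add: right_diff_distrib[symmetric] algebra_simps)
    show "snd (cell_center eps m i) - snd (cell_center eps m j) =
      snd (cell_center eps m (nat r1 + m * nat r2)) - snd (cell_center eps m 0) + 2 * Q * of_int k2"
      unfolding cell_center_def div_eq using k2 grid[symmetric]
      by (simp add: right_diff_distrib[symmetric] algebra_simps)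
  qed
qed

lemma mod_diff_right_cancel: "((a::int) - c) mod m = (b - c) mod m \<Longrightarrow> a mod m = b mod m"
  by (metis mod_diff_cong diff_add_cancel mod_add_cong)

lemma cell_diff_less: "m > 0 \<Longrightarrow> cell_diff m j i < m\<^sup>2"
proof -
  assume m: "m > 0"
  let ?r1 = "nat ((int (i mod m) - int (j mod m)) mod int m)"
  let ?r2 = "nat ((int (i div m) - int (j div m)) mod int m)"
  have "?r1 < m" "?r2 < m" using m by (simp_all add: nat_less_iff)
  then have "?r1 + m * ?r2 < m + m * ?r2" by simp
  also have "\<dots> = m * (?r2 + 1)" by simp
  also have "\<dots> \<le> m * m" using \<open>?r2 < m\<close> by (intro mult_le_mono2) simp
  finally show ?thesis by (simp add: cell_diff_def power2_eq_square)
qed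

lemma inj_on_cell_diff: "m > 0 \<Longrightarrow> inj_on (cell_diff m j) {..<m\<^sup>2}"
proof (rule inj_onI)
  fix i i' assume m: "m > 0" and i: "i \<in> {..<m\<^sup>2}" and i': "i' \<in> {..<m\<^sup>2}"
    and eq: "cell_diff m j i = cell_diff m j i'"
  let ?r1 = "\<lambda>i. (int (i mod m) - int (j mod m)) mod int m"
  let ?r2 = "\<lambda>i. (int (i div m) - int (j div m)) mod int m"
  have b: "nat (?r1 i) < m" "nat (?r1 i') < m" using m by (simp_all add: nat_less_iff)
  have "cell_diff m j i mod m = nat (?r1 i)" "cell_diff m j i' mod m = nat (?r1 i')"
    using b by (simp_all add: cell_diff_def)
  then have "nat (?r1 i) = nat (?r1 i')" using eq by simp
  moreover have "0 \<le> ?r1 i" "0 \<le> ?r1 i'" using m by simp_all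
  ultimately have "?r1 i = ?r1 i'" by (simp add: eq_nat_nat_iff)
  then have "int (i mod m) mod int m = int (i' mod m) mod int m" by (rule mod_diff_right_cancel)
  then have mod_eq: "i mod m = i' mod m" using m by (simp add: zmod_int[symmetric])
  have "cell_diff m j i div m = nat (?r2 i)" "cell_diff m j i' div m = nat (?r2 i')"
    using b m by (simp_all add: cell_diff_def)
  then have "nat (?r2 i) = nat (?r2 i')" using eq by simp
  moreover have "0 \<le> ?r2 i" "0 \<le> ?r2 i'" using m by simp_all
  ultimately have "?r2 i = ?r2 i'" by (simp add: eq_nat_nat_iff)
  then have "int (i div m) mod int m = int (i' div m) mod int m" by (rule mod_diff_right_cancel)
  moreover have "i div m < m" "i' div m < m" using i i' m
    by (simp_all add: less_mult_imp_div_less power2_eq_square)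
  ultimately have div_eq: "i div m = i' div m" by (simp add: zmod_int[symmetric])
  show "i = i'" using mod_eq div_eq by (metis div_mult_mod_eq)
qed

lemma bij_betw_cell_diff: "m > 0 \<Longrightarrow> bij_betw (cell_diff m j) {..<m\<^sup>2} {..<m\<^sup>2}"
proof -
  assume m: "m > 0"
  have "cell_diff m j ` {..<m\<^sup>2} = {..<m\<^sup>2}"
    using inj_on_cell_diff[OF m] cell_diff_less[OF m] by (intro endo_inj_surj) auto
  then show ?thesis using inj_on_cell_diff[OF m] by (simp add: bij_betw_def)
qed

context pathloss
begin

lemma l_eps_column_sum:
  assumes "real m * eps = 2 * Q" and "m > 0"
  shows "(\<Sum>i<m\<^sup>2. l_eps l Q eps (cell_center eps m i) (cell_center eps m j))
       = (\<Sum>k<m\<^sup>2. l_eps l Q eps (cell_center eps m k) (cell_center eps m 0))"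
proof -
  have "(\<Sum>i<m\<^sup>2. l_eps l Q eps (cell_center eps m i) (cell_center eps m j))
      = (\<Sum>i<m\<^sup>2. l_eps l Q eps (cell_center eps m (cell_diff m j i)) (cell_center eps m 0))"
    by (intro sum.cong refl) (rule l_eps_cell_diff[OF assms])
  also have "\<dots> = (\<Sum>k<m\<^sup>2. l_eps l Q eps (cell_center eps m k) (cell_center eps m 0))"
    by (rule sum.reindex_bij_betw[OF bij_betw_cell_diff[OF assms(2)]])
  finally show ?thesis .
qed

end

section \<open>The discretized chain\<close>

lemma quadratic_form_update:
  fixes f :: "nat \<Rightarrow> real"
  assumes "k < N" and sym: "\<And>i j. i < N \<Longrightarrow> j < N \<Longrightarrow> w i j = w j i" and "w k k = 1"
  shows "(\<Sum>i<N. \<Sum>j<N. (f i + (if i = k then d else 0)) * (f j + (if j = k then d else 0)) * w i j)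
       = (\<Sum>i<N. \<Sum>j<N. f i * f j * w i j) + 2 * d * (\<Sum>j<N. f j * w k j) + d\<^sup>2"
proof -
  have split: "(f i + (if i = k then d else 0)) * (f j + (if j = k then d else 0)) * w i j
      = f i * f j * w i j + (if i = k then d * f j * w k j else 0)
        + (if j = k then d * f i * w i k else 0) + (if i = k \<and> j = k then d\<^sup>2 * w k k else 0)" for i j
    by (auto simp: algebra_simps power2_eq_square)
  have row: "(\<Sum>i<N. \<Sum>j<N. if i = k then d * f j * w k j else 0) = d * (\<Sum>j<N. f j * w k j)"
  proof -
    have "(\<Sum>i<N. \<Sum>j<N. if i = k then d * f j * w k j else 0)
        = (\<Sum>i<N. if i = k then (\<Sum>j<N. d * f j * w k j) else 0)"
      by (intro sum.cong) auto
    then show ?thesis using \<open>k < N\<close> by (simp add: sum.delta sum_distrib_left mult.assoc)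
  qed
  have col: "(\<Sum>i<N. \<Sum>j<N. if j = k then d * f i * w i k else 0) = d * (\<Sum>j<N. f j * w k j)"
  proof -
    have "(\<Sum>i<N. \<Sum>j<N. if j = k then d * f i * w i k else 0) = (\<Sum>i<N. d * f i * w i k)"
      using \<open>k < N\<close> by (simp add: sum.delta')
    also have "\<dots> = (\<Sum>i<N. d * (f i * w k i))" using sym \<open>k < N\<close> by (intro sum.cong) auto
    finally show ?thesis by (simp add: sum_distrib_left)
  qed
  have diag: "(\<Sum>i<N. \<Sum>j<N. if i = k \<and> j = k then d\<^sup>2 * w k k else 0) = d\<^sup>2"
  proof -
    have "(\<Sum>i<N. \<Sum>j<N. if i = k \<and> j = k then d\<^sup>2 * w k k else 0)
        = (\<Sum>i<N. if i = k then (\<Sum>j<N. if j = k then d\<^sup>2 else 0) else 0)"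
      using \<open>w k k = 1\<close> by (intro sum.cong) auto
    then show ?thesis using \<open>k < N\<close> by (simp add: sum.delta)
  qed
  show ?thesis
    unfolding split sum.distrib row col diag by simp
qed

lemma ln_one_plus_inverse_ge: "(D::real) > 0 \<Longrightarrow> 1 / (D + 1) \<le> ln (1 + 1 / D)"
proof -
  assume "D > 0"
  have "ln (D / (D + 1)) \<le> D / (D + 1) - 1" using \<open>D > 0\<close> by (intro ln_le_minus_one) simp
  moreover have "1 + 1 / D = (D + 1) / D" using \<open>D > 0\<close> by (simp add: field_simps)
  ultimately show ?thesis using \<open>D > 0\<close> by (simp add: ln_div field_simps)
qed

text \<open>The death rate \<open>r\<close> of a cell holding \<open>x\<close> users under total interference \<open>Y\<close>;
  the last bound is what a death contributes to the drift of the energy.\<close>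
lemma log_death_rate_bounds:
  fixes c x Y N0 :: real
  assumes "c > 0" "1 \<le> x" "x \<le> Y" "N0 > 0"
  defines "r \<equiv> c * x * ln (1 + 1 / (N0 + (Y - 1)))"
  shows "0 < r" "r \<le> c * (1 + 1 / N0)" "c * x - c * (N0 + 1/2) \<le> r * (Y - 1/2)"
proof -
  define D where "D = N0 + (Y - 1)"
  have D: "N0 + x - 1 \<le> D" "D > 0" using assms by (auto simp: D_def)
  have r: "r = c * x * ln (1 + 1 / D)" by (simp add: r_def D_def)
  show "0 < r" unfolding r using assms D by (simp add: ln_gt_zero)
  have "x \<le> (1 + 1 / N0) * D"
  proof -
    have "(1 + 1 / N0) * (N0 + x - 1) = N0 + x + (x - 1) / N0"
      using \<open>N0 > 0\<close> by (simp add: field_simps)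
    moreover have "(1 + 1 / N0) * (N0 + x - 1) \<le> (1 + 1 / N0) * D"
      using D \<open>N0 > 0\<close> by (intro mult_left_mono) auto
    moreover have "0 \<le> (x - 1) / N0" using assms by simp
    ultimately show ?thesis using \<open>N0 > 0\<close> by linarith
  qed
  then have "x * (1 / D) \<le> 1 + 1 / N0" using D by (simp add: field_simps)
  have "r \<le> c * x * (1 / D)"
    unfolding r using ln_add_one_self_le_self[of "1 / D"] D assms by (intro mult_left_mono) auto
  also have "\<dots> \<le> c * (1 + 1 / N0)"
    using mult_left_mono[OF \<open>x * (1 / D) \<le> 1 + 1 / N0\<close>, of c] \<open>c > 0\<close> by (simp only: mult.assoc)
  finally show "r \<le> c * (1 + 1 / N0)" .
  have ratio: "x - (N0 + 1/2) \<le> x * (Y - 1/2) / (N0 + Y)"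
  proof -
    have "(x - (N0 + 1/2)) * (N0 + Y) = x * (Y - 1/2) + x * (N0 + 1/2) - (N0 + 1/2) * (N0 + Y)"
      by (simp add: algebra_simps)
    moreover have "x * (N0 + 1/2) \<le> (N0 + Y) * (N0 + 1/2)"
      using assms by (intro mult_right_mono) auto
    ultimately show ?thesis using assms by (simp add: le_divide_eq)
  qed
  have "c * x - c * (N0 + 1/2) = c * (x - (N0 + 1/2))" by (simp add: right_diff_distrib)
  also have "\<dots> \<le> c * (x * (Y - 1/2) / (N0 + Y))" using \<open>c > 0\<close> by (intro mult_left_mono ratio) simp
  also have "\<dots> = c * x * (1 / (D + 1)) * (Y - 1/2)" by (simp add: D_def)
  also have "\<dots> \<le> r * (Y - 1/2)"
    unfolding r using ln_one_plus_inverse_ge[OF D(2)] assms by (intro mult_right_mono mult_left_mono) auto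
  finally show "c * x - c * (N0 + 1/2) \<le> r * (Y - 1/2)" .
qed

lemma nn_integral_count_space_single:
  "(\<integral>\<^sup>+ y. ennreal (if y = w then c else 0) * g y \<partial>count_space A)
    = (if w \<in> A then ennreal c * g w else 0)"
proof -
  have "(\<integral>\<^sup>+ y. ennreal (if y = w then c else 0) * g y \<partial>count_space A)
      = (\<Sum>y\<in>A \<inter> {w}. ennreal (if y = w then c else 0) * g y)"
    by (intro nn_integral_count_space') auto
  then show ?thesis by (cases "w \<in> A") auto
qed

locale disc_chain = pathloss l Q eps for l Q eps +
  fixes m :: nat and lam C L N0 :: real
  assumes grid: "real m * eps = 2 * Q" and m_pos: "m > 0"
    and C_pos: "C > 0" and L_pos: "L > 0" and lam_pos: "lam > 0" and N0_pos: "N0 > 0"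
begin

abbreviation "rate \<equiv> disc_rate l Q eps m lam C L N0"
abbreviation "states \<equiv> disc_states m"

definition "weight i j = l_eps l Q eps (cell_center eps m i) (cell_center eps m j)"
definition "interference z i = (\<Sum>j<m\<^sup>2. real (z ! j) * weight i j)"
definition "energy z = (\<Sum>i<m\<^sup>2. \<Sum>j<m\<^sup>2. real (z ! i) * real (z ! j) * weight i j) / 2"
definition "population z = (\<Sum>i<m\<^sup>2. real (z ! i))"
definition "death z i = (if 0 < z ! i then death_rate l Q eps m C L N0 z i else 0)"
definition "S0 = (\<Sum>k<m\<^sup>2. weight k 0)"
definition "death_coeff = C / (L * ln 2)"
definition "birth = lam * eps\<^sup>2"

lemma birth_pos: "birth > 0"
  using lam_pos eps_pos by (simp add: birth_def)

lemma death_coeff_pos: "death_coeff > 0"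
  using C_pos L_pos by (simp add: death_coeff_def)

lemma weight_commute: "weight i j = weight j i"
  by (simp add: weight_def l_eps_commute)

lemma weight_diag: "weight i i = 1"
  by (simp add: weight_def l_eps_diag)

lemma weight_nonneg: "weight i j \<ge> 0"
  by (simp add: weight_def l_eps_nonneg)

lemma S0_ge_1: "S0 \<ge> 1"
  using member_le_sum[of 0 "{..<m\<^sup>2}" "\<lambda>k. weight k 0"] m_pos weight_nonneg
  by (simp add: S0_def weight_diag)

lemma interference_ge: "i < m\<^sup>2 \<Longrightarrow> real (z ! i) \<le> interference z i"
  using member_le_sum[of i "{..<m\<^sup>2}" "\<lambda>j. real (z ! j) * weight i j"] weight_nonneg
  by (simp add: interference_def weight_diag)

lemma weight_column_sum: "(\<Sum>i<m\<^sup>2. weight i j) = S0"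
  unfolding weight_def S0_def by (rule l_eps_column_sum[OF grid m_pos])

lemma sum_interference: "(\<Sum>i<m\<^sup>2. interference z i) = S0 * population z"
proof -
  have "(\<Sum>i<m\<^sup>2. interference z i) = (\<Sum>j<m\<^sup>2. real (z ! j) * (\<Sum>i<m\<^sup>2. weight i j))"
    unfolding interference_def by (subst sum.swap) (simp add: sum_distrib_left)
  also have "\<dots> = (\<Sum>j<m\<^sup>2. real (z ! j) * S0)"
    by (simp add: weight_column_sum)
  finally show ?thesis by (simp add: population_def sum_distrib_left mult.commute)
qed

lemma energy_nonneg: "energy z \<ge> 0"
  unfolding energy_def using weight_nonneg by (auto intro!: sum_nonneg)

lemma energy_update:
  assumes "length z = m\<^sup>2" "k < m\<^sup>2"
  shows "energy (z[k := v]) = energy z + (real v - real (z ! k)) * interference z k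
    + (real v - real (z ! k))\<^sup>2 / 2"
proof -
  let ?d = "real v - real (z ! k)"
  have "real (z[k := v] ! j) = real (z ! j) + (if j = k then ?d else 0)" if "j < m\<^sup>2" for j
    using assms that by (auto simp: nth_list_update)
  then have "(\<Sum>i<m\<^sup>2. \<Sum>j<m\<^sup>2. real (z[k := v] ! i) * real (z[k := v] ! j) * weight i j)
      = (\<Sum>i<m\<^sup>2. \<Sum>j<m\<^sup>2. (real (z ! i) + (if i = k then ?d else 0))
          * (real (z ! j) + (if j = k then ?d else 0)) * weight i j)"
    by (intro sum.cong) auto
  also have "\<dots> = (\<Sum>i<m\<^sup>2. \<Sum>j<m\<^sup>2. real (z ! i) * real (z ! j) * weight i j)
      + 2 * ?d * interference z k + ?d\<^sup>2"
    unfolding interference_def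
    by (rule quadratic_form_update[OF assms(2)]) (auto simp: weight_commute weight_diag)
  finally show ?thesis unfolding energy_def by (simp add: field_simps)
qed

lemma death_rate_interference:
  assumes "i < m\<^sup>2"
  shows "death_rate l Q eps m C L N0 z i = C / L * real (z ! i)
    * log 2 (1 + 1 / (N0 + (interference z i - 1)))"
proof -
  have "(\<Sum>j<m\<^sup>2. (real (z ! j) - (if j = i then 1 else 0)) * weight i j) = interference z i - 1"
    using assms unfolding interference_def
    by (simp add: left_diff_distrib sum_subtractf if_distrib[of "\<lambda>x. x * _"] weight_diag cong: if_cong)
  then show ?thesis unfolding death_rate_def by (simp add: weight_def)
qed

lemma death_eq:
  assumes "i < m\<^sup>2" "0 < z ! i"
  shows "death z i = death_coeff * real (z ! i) * ln (1 + 1 / (N0 + (interference z i - 1)))"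
  using assms death_rate_interference[OF assms(1)]
  by (simp add: death_def death_coeff_def log_def field_simps)

lemma
  assumes "i < m\<^sup>2"
  shows death_nonneg: "death z i \<ge> 0"
    and death_pos: "0 < z ! i \<Longrightarrow> death z i > 0"
    and death_le: "death z i \<le> death_coeff * (1 + 1 / N0)"
    and death_energy_drop:
      "death_coeff * real (z ! i) - death_coeff * (N0 + 1/2) \<le> death z i * (interference z i - 1/2)"
proof -
  have bounds: "0 < death z i \<and> death z i \<le> death_coeff * (1 + 1 / N0) \<and>
      death_coeff * real (z ! i) - death_coeff * (N0 + 1/2) \<le> death z i * (interference z i - 1/2)"
    if "0 < z ! i"
    using log_death_rate_bounds[OF death_coeff_pos _ interference_ge[OF assms] N0_pos] that
    by (simp add: death_eq[OF assms that])
  show "death z i \<ge> 0" "0 < z ! i \<Longrightarrow> death z i > 0"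
    using bounds by (auto simp: death_def less_imp_le)
  show "death z i \<le> death_coeff * (1 + 1 / N0)"
    "death_coeff * real (z ! i) - death_coeff * (N0 + 1/2) \<le> death z i * (interference z i - 1/2)"
    using bounds death_coeff_pos N0_pos by (cases "0 < z ! i"; simp add: death_def)+
qed

lemma disc_rate_eq:
  "rate z y = (\<Sum>i<m\<^sup>2. if y = z[i := z ! i + 1] then birth else 0)
    + (\<Sum>i<m\<^sup>2. if y = z[i := z ! i - 1] then death z i else 0)"
proof -
  have "(if 0 < z ! i \<and> y = w then death_rate l Q eps m C L N0 z i else 0)
      = (if y = w then death z i else 0)" for i w
    by (auto simp: death_def)
  then show ?thesis unfolding disc_rate_def birth_def by simp
qed

lemma nn_integral_disc_rate:
  assumes "z \<in> states"
  shows "(\<integral>\<^sup>+ y. ennreal (rate z y) * g y \<partial>count_space (states - {z}))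
    = (\<Sum>i<m\<^sup>2. ennreal birth * g (z[i := z ! i + 1]))
      + (\<Sum>i<m\<^sup>2. ennreal (death z i) * g (z[i := z ! i - 1]))"
proof -
  let ?A = "states - {z}"
  have len: "length z = m\<^sup>2" using assms by (simp add: disc_states_def)
  have "ennreal (rate z y) = (\<Sum>i<m\<^sup>2. ennreal (if y = z[i := z ! i + 1] then birth else 0))
      + (\<Sum>i<m\<^sup>2. ennreal (if y = z[i := z ! i - 1] then death z i else 0))" for y
  proof -
    have sums: "(\<Sum>i<m\<^sup>2. ennreal (if y = z[i := z ! i + 1] then birth else 0))
        = ennreal (\<Sum>i<m\<^sup>2. if y = z[i := z ! i + 1] then birth else 0)"
      "(\<Sum>i<m\<^sup>2. ennreal (if y = z[i := z ! i - 1] then death z i else 0))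
        = ennreal (\<Sum>i<m\<^sup>2. if y = z[i := z ! i - 1] then death z i else 0)"
      using birth_pos death_nonneg by (intro sum_ennreal; simp)+
    show ?thesis
      unfolding disc_rate_eq sums using birth_pos death_nonneg by (intro ennreal_plus sum_nonneg) auto
  qed
  then have "(\<integral>\<^sup>+ y. ennreal (rate z y) * g y \<partial>count_space ?A)
     = (\<Sum>i<m\<^sup>2. \<integral>\<^sup>+ y. ennreal (if y = z[i := z ! i + 1] then birth else 0) * g y \<partial>count_space ?A)
     + (\<Sum>i<m\<^sup>2. \<integral>\<^sup>+ y. ennreal (if y = z[i := z ! i - 1] then death z i else 0) * g y \<partial>count_space ?A)"
    by (simp add: distrib_right sum_distrib_right nn_integral_add nn_integral_sum)
  also have "\<dots> = (\<Sum>i<m\<^sup>2. ennreal birth * g (z[i := z ! i + 1]))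
      + (\<Sum>i<m\<^sup>2. ennreal (death z i) * g (z[i := z ! i - 1]))"
  proof (intro arg_cong2[where f="(+)"] sum.cong refl)
    fix i assume "i \<in> {..<m\<^sup>2}"
    then have i: "i < length z" using len by simp
    then have "z[i := z ! i + 1] \<in> ?A" "0 < z ! i \<Longrightarrow> z[i := z ! i - 1] \<in> ?A"
      using len by (auto simp: disc_states_def list_eq_iff_nth_eq nth_list_update)
    then show "(\<integral>\<^sup>+ y. ennreal (if y = z[i := z ! i + 1] then birth else 0) * g y \<partial>count_space ?A)
        = ennreal birth * g (z[i := z ! i + 1])"
      "(\<integral>\<^sup>+ y. ennreal (if y = z[i := z ! i - 1] then death z i else 0) * g y \<partial>count_space ?A)
        = ennreal (death z i) * g (z[i := z ! i - 1])"
      by (auto simp: nn_integral_count_space_single death_def)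
  qed
  finally show ?thesis .
qed

definition "total_rate z = real (m\<^sup>2) * birth + (\<Sum>i<m\<^sup>2. death z i)"
definition "energy_flow z = (\<Sum>i<m\<^sup>2. birth * energy (z[i := z ! i + 1]))
    + (\<Sum>i<m\<^sup>2. death z i * energy (z[i := z ! i - 1]))"
definition "drift_const = real (m\<^sup>2) * birth / 2 + real (m\<^sup>2) * death_coeff * (N0 + 1/2)"
definition "max_rate = real (m\<^sup>2) * birth + real (m\<^sup>2) * (death_coeff * (1 + 1 / N0))"

lemma drift_const_nonneg: "drift_const \<ge> 0"
  unfolding drift_const_def using birth_pos death_coeff_pos N0_pos by simp

lemma energy_flow_nonneg: "energy_flow z \<ge> 0"
  unfolding energy_flow_def using birth_pos death_nonneg energy_nonneg
  by (intro add_nonneg_nonneg sum_nonneg mult_nonneg_nonneg) auto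

lemma total_rate_ge_birth: "birth \<le> total_rate z"
proof -
  have "birth \<le> real (m\<^sup>2) * birth" using m_pos birth_pos by (simp add: Suc_le_eq)
  also have "\<dots> \<le> total_rate z" unfolding total_rate_def by (auto intro!: sum_nonneg death_nonneg)
  finally show ?thesis .
qed

lemma total_rate_le_max: "total_rate z \<le> max_rate"
  using sum_mono[of "{..<m\<^sup>2}" "death z" "\<lambda>_. death_coeff * (1 + 1 / N0)"] death_le
  by (simp add: total_rate_def max_rate_def)

lemma energy_flow_eq:
  assumes "z \<in> states"
  shows "energy_flow z = total_rate z * energy z
    + ((\<Sum>i<m\<^sup>2. birth * (interference z i + 1/2)) + (\<Sum>i<m\<^sup>2. death z i * (1/2 - interference z i)))"
proof -
  have len: "length z = m\<^sup>2" using assms by (simp add: disc_states_def)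
  have up: "birth * energy (z[i := z ! i + 1]) = birth * energy z + birth * (interference z i + 1/2)"
    if "i < m\<^sup>2" for i
    using energy_update[OF len that, of "z ! i + 1"] by (simp add: algebra_simps)
  have down: "death z i * energy (z[i := z ! i - 1]) = death z i * energy z + death z i * (1/2 - interference z i)"
    if "i < m\<^sup>2" for i
  proof (cases "0 < z ! i")
    case True
    then have "energy (z[i := z ! i - 1]) = energy z - interference z i + 1/2"
      using energy_update[OF len that, of "z ! i - 1"] by (simp add: of_nat_diff)
    then show ?thesis by (simp only: ring_distribs)
  qed (simp add: death_def)
  have "(\<Sum>i<m\<^sup>2. birth * energy (z[i := z ! i + 1]))
      = (\<Sum>i<m\<^sup>2. birth * energy z + birth * (interference z i + 1/2))"
    "(\<Sum>i<m\<^sup>2. death z i * energy (z[i := z ! i - 1]))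
      = (\<Sum>i<m\<^sup>2. death z i * energy z + death z i * (1/2 - interference z i))"
    using up down by (auto intro: sum.cong)
  then show ?thesis unfolding energy_flow_def total_rate_def sum.distrib
    by (simp add: sum_distrib_right[symmetric] sum_distrib_left[symmetric] algebra_simps)
qed

lemma energy_flow_bound:
  assumes "z \<in> states"
  shows "energy_flow z - total_rate z * energy z \<le> drift_const - (death_coeff - birth * S0) * population z"
proof -
  have "(\<Sum>i<m\<^sup>2. birth * (interference z i + 1/2)) = birth * S0 * population z + real (m\<^sup>2) * birth / 2"
    by (simp add: sum.distrib sum_distrib_left[symmetric] sum_interference algebra_simps)
  moreover have "(\<Sum>i<m\<^sup>2. death z i * (1/2 - interference z i))
      \<le> (\<Sum>i<m\<^sup>2. death_coeff * (N0 + 1/2) - death_coeff * real (z ! i))"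
    using death_energy_drop by (intro sum_mono) (simp add: algebra_simps)
  moreover have "(\<Sum>i<m\<^sup>2. death_coeff * (N0 + 1/2) - death_coeff * real (z ! i))
      = real (m\<^sup>2) * death_coeff * (N0 + 1/2) - death_coeff * population z"
    by (simp add: sum_subtractf population_def sum_distrib_left)
  ultimately show ?thesis using energy_flow_eq[OF assms] unfolding drift_const_def by (simp add: algebra_simps)
qed

lemma energy_drift_large_population:
  assumes "z \<in> states" and stable: "birth * S0 < death_coeff"
    and large: "(drift_const + max_rate) / (death_coeff - birth * S0) \<le> population z"
  shows "energy_flow z / total_rate z + 1 \<le> energy z"
proof -
  have "drift_const + max_rate \<le> (death_coeff - birth * S0) * population z"
    using large stable by (simp add: divide_le_eq mult.commute)
  then have "energy_flow z \<le> total_rate z * (energy z - 1)"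
    using energy_flow_bound[OF assms(1)] total_rate_le_max[of z] by (simp add: algebra_simps)
  then have "energy_flow z / total_rate z \<le> energy z - 1"
    using total_rate_ge_birth[of z] birth_pos by (simp add: divide_le_eq mult.commute)
  then show ?thesis by simp
qed

lemma energy_drift_bounded:
  assumes "z \<in> states" and stable: "birth * S0 < death_coeff"
  shows "energy_flow z / total_rate z \<le> energy z + drift_const / birth"
proof -
  have "population z \<ge> 0" unfolding population_def by (auto intro!: sum_nonneg)
  then have "energy_flow z - total_rate z * energy z \<le> drift_const"
    using energy_flow_bound[OF assms(1)] mult_nonneg_nonneg[of "death_coeff - birth * S0" "population z"]
      stable by linarith
  also have "drift_const = drift_const / birth * birth" using birth_pos by simp
  also have "\<dots> \<le> drift_const / birth * total_rate z"
    using total_rate_ge_birth[of z] drift_const_nonneg birth_pos by (intro mult_left_mono) auto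
  finally show ?thesis
    using total_rate_ge_birth[of z] birth_pos by (simp add: divide_le_eq algebra_simps)
qed

lemma out_rate_eq:
  assumes "z \<in> states"
  shows "out_rate rate states z = ennreal (total_rate z)"
proof -
  have "out_rate rate states z = (\<Sum>i<m\<^sup>2. ennreal birth) + (\<Sum>i<m\<^sup>2. ennreal (death z i))"
    using nn_integral_disc_rate[OF assms, of "\<lambda>_. 1"] by (simp add: out_rate_def)
  also have "\<dots> = ennreal (real (m\<^sup>2) * birth) + ennreal (\<Sum>i<m\<^sup>2. death z i)"
  proof -
    have "(\<Sum>i<m\<^sup>2. ennreal (death z i)) = ennreal (\<Sum>i<m\<^sup>2. death z i)"
      using death_nonneg by (intro sum_ennreal) auto
    then show ?thesis using birth_pos by (simp add: ennreal_mult'' ennreal_of_nat_eq_real_of_nat)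
  qed
  also have "\<dots> = ennreal (total_rate z)"
    unfolding total_rate_def using birth_pos death_nonneg
    by (intro ennreal_plus[symmetric] sum_nonneg) auto
  finally show ?thesis .
qed

lemma kernel_op_jump_energy:
  assumes "z \<in> states"
  shows "kernel_op (jump_prob rate states) states (\<lambda>y. ennreal (energy y)) z
    = ennreal (energy_flow z / total_rate z)"
proof -
  have "(\<Sum>i<m\<^sup>2. ennreal birth * ennreal (energy (z[i := z ! i + 1])))
      = ennreal (\<Sum>i<m\<^sup>2. birth * energy (z[i := z ! i + 1]))"
    using birth_pos energy_nonneg by (simp add: ennreal_mult'[symmetric])
  moreover have "(\<Sum>i<m\<^sup>2. ennreal (death z i) * ennreal (energy (z[i := z ! i - 1])))
      = ennreal (\<Sum>i<m\<^sup>2. death z i * energy (z[i := z ! i - 1]))"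
  proof -
    have "(\<Sum>i<m\<^sup>2. ennreal (death z i) * ennreal (energy (z[i := z ! i - 1])))
        = (\<Sum>i<m\<^sup>2. ennreal (death z i * energy (z[i := z ! i - 1])))"
      using death_nonneg energy_nonneg by (intro sum.cong refl) (simp add: ennreal_mult)
    also have "\<dots> = ennreal (\<Sum>i<m\<^sup>2. death z i * energy (z[i := z ! i - 1]))"
      using death_nonneg energy_nonneg by (intro sum_ennreal) auto
    finally show ?thesis .
  qed
  moreover have "ennreal (\<Sum>i<m\<^sup>2. birth * energy (z[i := z ! i + 1]))
      + ennreal (\<Sum>i<m\<^sup>2. death z i * energy (z[i := z ! i - 1])) = ennreal (energy_flow z)"
    unfolding energy_flow_def using birth_pos death_nonneg energy_nonneg
    by (intro ennreal_plus[symmetric] sum_nonneg mult_nonneg_nonneg) auto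
  ultimately have "(\<integral>\<^sup>+ y. ennreal (rate z y) * ennreal (energy y) \<partial>count_space (states - {z}))
      = ennreal (energy_flow z)"
    unfolding nn_integral_disc_rate[OF assms] by simp
  then show ?thesis
    using kernel_op_jump_prob[OF assms] out_rate_eq[OF assms] total_rate_ge_birth[of z] birth_pos
      energy_flow_nonneg
    by (simp add: divide_ennreal)
qed

lemma disc_rate_birth_ge:
  assumes "i < m\<^sup>2"
  shows "birth \<le> rate z (z[i := z ! i + 1])"
proof -
  have "birth \<le> (\<Sum>k<m\<^sup>2. if z[i := z ! i + 1] = z[k := z ! k + 1] then birth else 0)"
    using member_le_sum[of i "{..<m\<^sup>2}" "\<lambda>k. if z[i := z ! i + 1] = z[k := z ! k + 1] then birth else 0"]
      assms birth_pos by simp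
  also have "\<dots> \<le> rate z (z[i := z ! i + 1])"
    unfolding disc_rate_eq using death_nonneg by (intro le_add_same_cancel1[THEN iffD2] sum_nonneg) auto
  finally show ?thesis .
qed

lemma disc_rate_death_pos:
  assumes "i < m\<^sup>2" "0 < z ! i"
  shows "0 < rate z (z[i := z ! i - 1])"
proof -
  have "death z i \<le> (\<Sum>k<m\<^sup>2. if z[i := z ! i - 1] = z[k := z ! k - 1] then death z k else 0)"
    using member_le_sum[of i "{..<m\<^sup>2}" "\<lambda>k. if z[i := z ! i - 1] = z[k := z ! k - 1] then death z k else 0"]
      assms death_nonneg by simp
  also have "\<dots> \<le> rate z (z[i := z ! i - 1])"
    unfolding disc_rate_eq using birth_pos by (intro le_add_same_cancel2[THEN iffD2] sum_nonneg) auto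
  finally show ?thesis using death_pos[OF assms] by simp
qed

abbreviation "moves \<equiv> {(a, b). a \<in> states \<and> b \<in> states \<and> a \<noteq> b \<and> rate a b > 0}"

lemma reaches_empty: "z \<in> states \<Longrightarrow> (z, replicate (m\<^sup>2) 0) \<in> moves\<^sup>*"
proof (induction "sum_list z" arbitrary: z rule: less_induct)
  case less
  have len: "length z = m\<^sup>2" using less.prems by (simp add: disc_states_def)
  show ?case
  proof (cases "\<exists>i<m\<^sup>2. 0 < z ! i")
    case False
    then have "z = replicate (m\<^sup>2) 0" using len by (auto simp: list_eq_iff_nth_eq)
    then show ?thesis by simp
  next
    case True
    then obtain i where i: "i < m\<^sup>2" "0 < z ! i" by blast
    let ?z' = "z[i := z ! i - 1]"
    have "?z' \<in> states" using less.prems by (simp add: disc_states_def)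
    moreover have "?z' \<noteq> z" using i len by (metis diff_less less_one nat_neq_iff nth_list_update_eq)
    ultimately have "(z, ?z') \<in> moves" using less.prems disc_rate_death_pos[OF i] by auto
    moreover have "sum_list ?z' < sum_list z"
      using i len elem_le_sum_list[of i z] by (simp add: sum_list_update)
    then have "(?z', replicate (m\<^sup>2) 0) \<in> moves\<^sup>*" using less.hyps \<open>?z' \<in> states\<close> by blast
    ultimately show ?thesis by (rule converse_rtrancl_into_rtrancl)
  qed
qed

lemma empty_reaches: "w \<in> states \<Longrightarrow> (replicate (m\<^sup>2) 0, w) \<in> moves\<^sup>*"
proof (induction "sum_list w" arbitrary: w rule: less_induct)
  case less
  have len: "length w = m\<^sup>2" using less.prems by (simp add: disc_states_def)
  show ?case
  proof (cases "\<exists>i<m\<^sup>2. 0 < w ! i")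
    case False
    then have "w = replicate (m\<^sup>2) 0" using len by (auto simp: list_eq_iff_nth_eq)
    then show ?thesis by simp
  next
    case True
    then obtain i where i: "i < m\<^sup>2" "0 < w ! i" by blast
    define w' where "w' = w[i := w ! i - 1]"
    have "w' \<in> states" using less.prems by (simp add: disc_states_def w'_def)
    moreover have "w'[i := w' ! i + 1] = w" using i len by (simp add: w'_def)
    moreover have "w' \<noteq> w" using i len unfolding w'_def by (metis diff_less less_one nat_neq_iff nth_list_update_eq)
    ultimately have "(w', w) \<in> moves"
      using less.prems disc_rate_birth_ge[OF i(1), of w'] birth_pos by auto
    moreover have "sum_list w' < sum_list w"
      using i len elem_le_sum_list[of i w] by (simp add: sum_list_update w'_def)
    then have "(replicate (m\<^sup>2) 0, w') \<in> moves\<^sup>*" using less.hyps \<open>w' \<in> states\<close> by blast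
    ultimately show ?thesis by (rule rtrancl_into_rtrancl[rotated])
  qed
qed

lemma disc_irreducible: "ctmc_irreducible rate states"
  unfolding ctmc_irreducible_def using reaches_empty empty_reaches by (blast intro: rtrancl_trans)

lemma disc_has_successor: "z \<in> states \<Longrightarrow> \<exists>y\<in>states. y \<noteq> z \<and> rate z y > 0"
proof -
  assume z: "z \<in> states"
  let ?y = "z[0 := z ! 0 + 1]"
  have "0 < m\<^sup>2" "length z = m\<^sup>2" using m_pos z by (simp_all add: disc_states_def)
  then have "?y \<in> states" "?y \<noteq> z"
    using z by (simp add: disc_states_def, metis n_not_Suc_n nth_list_update_eq Suc_eq_plus1)
  moreover have "rate z ?y > 0" using disc_rate_birth_ge[OF \<open>0 < m\<^sup>2\<close>] birth_pos by (meson less_le_trans)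
  ultimately show ?thesis by blast
qed

lemma finite_population_below: "finite {z \<in> states. population z < T}"
proof (rule finite_subset)
  show "finite {xs. set xs \<subseteq> {..nat \<lceil>T\<rceil>} \<and> length xs = m\<^sup>2}"
    by (rule finite_lists_length_eq) simp
  have "v \<le> nat \<lceil>T\<rceil>" if z: "z \<in> states" "population z < T" "v \<in> set z" for z v
  proof -
    obtain i where i: "i < m\<^sup>2" "z ! i = v"
      using z(1,3) by (auto simp: in_set_conv_nth disc_states_def)
    then have "real v \<le> population z"
      using member_le_sum[of i "{..<m\<^sup>2}" "\<lambda>i. real (z ! i)"] by (simp add: population_def)
    then show ?thesis using z(2) by linarith
  qed
  then show "{z \<in> states. population z < T} \<subseteq> {xs. set xs \<subseteq> {..nat \<lceil>T\<rceil>} \<and> length xs = m\<^sup>2}"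
    by (auto simp: disc_states_def)
qed

theorem disc_ergodic:
  assumes stable: "birth * S0 < death_coeff"
  shows "ctmc_ergodic rate states"
  unfolding ctmc_ergodic_def
proof (intro conjI ballI disc_irreducible)
  fix x assume "x \<in> states"
  define T where "T = (drift_const + max_rate) / (death_coeff - birth * S0)"
  show "ctmc_positive_recurrent rate states x"
  proof (rule ctmc_positive_recurrent_foster[OF \<open>x \<in> states\<close> birth_pos _ disc_irreducible
        disc_has_successor finite_population_below[of T], where V="\<lambda>y. ennreal (energy y)"
        and D="drift_const / birth"])
    fix z assume z: "z \<in> states"
    show "ennreal birth \<le> out_rate rate states z \<and> out_rate rate states z < \<infinity>"
      using out_rate_eq[OF z] total_rate_ge_birth[of z] by (simp add: ennreal_leI)
    show "kernel_op (jump_prob rate states) states (\<lambda>y. ennreal (energy y)) z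
        \<le> ennreal (energy z) + ennreal (drift_const / birth)"
      using kernel_op_jump_energy[OF z] ennreal_leI[OF energy_drift_bounded[OF z stable]]
        energy_nonneg drift_const_nonneg birth_pos
      by (simp add: ennreal_plus)
  next
    fix z assume "z \<in> states - {z \<in> states. population z < T}"
    then have z: "z \<in> states" "T \<le> population z" by auto
    have "energy_flow z / total_rate z \<ge> 0"
      using energy_flow_nonneg total_rate_ge_birth[of z] birth_pos by simp
    then have "kernel_op (jump_prob rate states) states (\<lambda>y. ennreal (energy y)) z + 1
        = ennreal (energy_flow z / total_rate z + 1)"
      using kernel_op_jump_energy[OF z(1)] by (simp add: ennreal_plus)
    also have "\<dots> \<le> ennreal (energy z)"
      using energy_drift_large_population[OF z(1) stable] z(2) by (intro ennreal_leI) (simp add: T_def)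
    finally show "kernel_op (jump_prob rate states) states (\<lambda>y. ennreal (energy y)) z + 1
        \<le> ennreal (energy z)" .
  qed (use drift_const_nonneg birth_pos in simp_all)
qed

end

theorem mainTheorem9:
  fixes Q eps lam C L N0 :: real and l :: "real \<Rightarrow> real" and m :: nat
  assumes "Q > 0" and "eps > 0" and "real m = 2 * Q / eps"
    and "C > 0" and "L > 0" and "lam > 0" and "N0 > 0"
    and "\<forall>r\<ge>0. l r \<ge> 0" and "l 0 = 1"
    and "\<forall>r s. 0 \<le> r \<longrightarrow> r \<le> s \<longrightarrow> l s \<le> l r"
    and "bounded (l ` {0..})"
    and "lam < C / (L * ln 2 * eps\<^sup>2 *
            (\<Sum>k<m\<^sup>2. l_eps l Q eps (cell_center eps m k) (cell_center eps m 0)))"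
  shows "ctmc_ergodic (disc_rate l Q eps m lam C L N0) (disc_states m)"
proof -
  have "real m > 0" using assms(1-3) by simp
  then have "m > 0" by simp
  have "real m * eps = 2 * Q" using assms(2,3) by (simp add: field_simps)
  interpret disc_chain l Q eps m lam C L N0
    using \<open>m > 0\<close> \<open>real m * eps = 2 * Q\<close> assms by unfold_locales auto
  have "lam * (L * ln 2 * eps\<^sup>2 * S0) < C"
    using assms(12) assms(2,5) S0_ge_1 by (simp add: S0_def weight_def less_divide_eq)
  then have "birth * S0 < death_coeff"
    using assms(5) by (simp add: birth_def death_coeff_def less_divide_eq algebra_simps)
  then show ?thesis by (rule disc_ergodic)
qed

end
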